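(* Let $m_\ell=(i_\ell,k_\ell,\nu_\ell)$, $\ell=1,2,3$, with $i_\ell\in\{1,\ldots,N\}$, $k_\ell\in\{1,\ldots,n\}$, $\nu_\ell\in\{1,2\}$, and let $r>0$. Write $\psi^{-1}(\leq r)=\{p\in\mathbb{R}^{nN}\mid\psi(p)\leq r\}$. (a) (i) $X_{m_1}$ is of class $C^1$ on $\mathbb{R}^{nN}$ and bounded by a multiple of $\psi$ on $\psi^{-1}(\leq r)$; (ii) $(\mathrm{D}X_{m_1})X_{m_2}$ is continuous on $\mathbb{R}^{nN}$ and bounded by a multiple of $\psi^{3/2}$ on $\psi^{-1}(\leq r)$. (b) (i) $X_{m_1}\psi$ is of class $C^2$ on $\mathbb{R}^{nN}$ and bounded by a multiple of $\psi^{3/2}$ on $\psi^{-1}(\leq r)$; (ii) $X_{m_2}(X_{m_1}\psi)$ is of class $C^1$ and bounded by a multiple of $\psi^2$ on $\psi^{-1}(\leq r)$; (iii) $X_{m_3}(X_{m_2}(X_{m_1}\psi))$ is continuous and bounded by a multiple of $\psi^{5/2}$ on $\psi^{-1}(\leq r)$.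
   Context: $G=(V,E)$ is an undirected graph with $V=\{1,\ldots,N\}$ and nonempty edge set $E$ of two-element subsets (edges $ij$); $d_{ij}\geq0$ for $ij\in E$. For $p=(p_1,\ldots,p_N)\in\mathbb{R}^{nN}$: $\psi_i(p)=\frac14\sum_{j:\,ij\in E}(\|p_j-p_i\|^2-d_{ij}^2)^2$ and $\psi(p)=\frac14\sum_{ij\in E}(\|p_j-p_i\|^2-d_{ij}^2)^2$. For each $i$, $b_{i,1},\ldots,b_{i,n}$ is an orthonormal basis of $\mathbb{R}^n$; $B_{i,k}$ is the constant vector field on $\mathbb{R}^{nN}$ with $i$-th block $b_{i,k}$ and other blocks $0$. $X_m(p):=h_\nu(\psi_i(p))B_{i,k}(p)$ for $m=(i,k,\nu)$; $Xf(p)=\mathrm{D}f(p)X(p)$ denotes the Lie derivative of $f$ along $X$. The functions $h_1,h_2:\mathbb{R}\to\mathbb{R}$ satisfy, for $\nu=1,2$: (i) $h_\nu(y)=0$ for $y\leq 0$; (ii) $h_\nu$ is bounded and of class $C^2$ on $(0,\infty)$; (iii) $h_\nu(y)/y$ remains bounded as $y\downarrow 0$; (iv) $h_\nu'(y)$ remains bounded as $y\downarrow0$; (v) $h_\nu''(y)\,y$ remains bounded as $y\downarrow 0$; (vi) there exist $r',c'>0$ with $h_2'(y)h_1(y)-h_1'(y)h_2(y)\leq -c'y$ for all $y\in(0,r']$. A function $f$ (resp. vector field $X$) is bounded by a multiple of a nonnegative $b$ on $W$ if there is $c>0$ with $|f(x)|\leq c\,b(x)$ (resp. $\|X(x)\|\leq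 c\,b(x)$) for all $x\in W$. *)

theory Defs
  imports "HOL-Analysis.Analysis"
begin

definition C1 :: "('a::real_normed_vector \<Rightarrow> 'b::real_normed_vector) \<Rightarrow> bool" where
  "C1 f \<longleftrightarrow> (\<exists>f'. (\<forall>x. (f has_derivative blinfun_apply (f' x)) (at x)) \<and> continuous_on UNIV f')"

definition C2 :: "('a::real_normed_vector \<Rightarrow> 'b::real_normed_vector) \<Rightarrow> bool" where
  "C2 f \<longleftrightarrow> (\<exists>f'. (\<forall>x. (f has_derivative blinfun_apply (f' x)) (at x)) \<and> C1 f')"

text \<open>Configurations p in R^(nN): the block of vertex i is p $ i :: real^'n.\<close>

definition edge_term :: "('v set \<Rightarrow> real) \<Rightarrow> real^'n^'v \<Rightarrow> 'v set \<Rightarrow> real" where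
  "edge_term d p e =
     (let i = (SOME i. i \<in> e); j = (SOME j. j \<in> e \<and> j \<noteq> i)
      in ((norm (p $ j - p $ i))\<^sup>2 - (d e)\<^sup>2)\<^sup>2)"

definition psi :: "'v set set \<Rightarrow> ('v set \<Rightarrow> real) \<Rightarrow> real^'n^'v \<Rightarrow> real" where
  "psi E d p = 1/4 * (\<Sum>e\<in>E. edge_term d p e)"

definition psi_i :: "'v set set \<Rightarrow> ('v set \<Rightarrow> real) \<Rightarrow> 'v \<Rightarrow> real^'n^'v \<Rightarrow> real" where
  "psi_i E d i p = 1/4 * (\<Sum>j\<in>{j. {i, j} \<in> E}. ((norm (p $ j - p $ i))\<^sup>2 - (d {i, j})\<^sup>2)\<^sup>2)"

definition Bfield :: "('v \<Rightarrow> 'n \<Rightarrow> real^'n) \<Rightarrow> 'v \<Rightarrow> 'n \<Rightarrow> real^'n^'v" where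
  "Bfield b i k = (\<chi> j. if j = i then b i k else 0)"

definition Xfield :: "'v set set \<Rightarrow> ('v set \<Rightarrow> real) \<Rightarrow> ('v \<Rightarrow> 'n \<Rightarrow> real^'n) \<Rightarrow>
    (nat \<Rightarrow> real \<Rightarrow> real) \<Rightarrow> 'v \<times> 'n \<times> nat \<Rightarrow> real^'n^'v \<Rightarrow> real^'n^'v" where
  "Xfield E d b h m p = (case m of (i, k, \<nu>) \<Rightarrow> h \<nu> (psi_i E d i p) *\<^sub>R Bfield b i k)"

definition lie :: "('a::real_normed_vector \<Rightarrow> 'a) \<Rightarrow> ('a \<Rightarrow> 'b::real_normed_vector) \<Rightarrow> 'a \<Rightarrow> 'b" where
  "lie X f p = frechet_derivative f (at p) (X p)"

definition admissible_h :: "(real \<Rightarrow> real) \<Rightarrow> bool" where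
  "admissible_h g \<longleftrightarrow>
     (\<forall>y\<le>0. g y = 0) \<and>
     bounded (range g) \<and>
     (\<forall>y>0. g field_differentiable (at y) \<and> deriv g field_differentiable (at y)) \<and>
     continuous_on {0<..} (deriv (deriv g)) \<and>
     Bfun (\<lambda>y. g y / y) (at_right 0) \<and>
     Bfun (deriv g) (at_right 0) \<and>
     Bfun (\<lambda>y. deriv (deriv g) y * y) (at_right 0)"

end

(*
  All functions involved are built from polynomials in the edge vectors p_j - p_i and from the
  compositions h_nu(psi_i), where psi_i is a quarter of a sum of squares f_j^2 of such
  polynomials.  Every directional derivative of psi_i lies in the ideal generated by the f_j,
  and |f_j| <= 2 sqrt psi_i.  On a sublevel set of psi the edge lengths are bounded, so edge
  polynomials are bounded there and elements of the ideal are O(psi_i^(1/2)).  Together with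
  h_nu(y) = O(y), h_nu' = O(1) and y h_nu'' = O(1) this gives: X_m psi = h_nu(psi_i) D psi_i B
  is O(psi^(3/2)), each further factor h_nu(psi_i) contributes O(psi), and each derivative of
  X_m psi loses at most psi^(1/2).  The same estimates yield differentiability and continuity
  at the zeros of psi_i, where the chain rule through h_nu is unavailable.  That X_m psi only
  involves psi_i holds because psi - psi_i does not depend on p_i.
*)

theory Submission
  imports Defs
begin

lemma C1I:
  fixes f :: "'a::euclidean_space \<Rightarrow> 'b::real_normed_vector"
  assumes deriv: "\<And>x. (f has_derivative D x) (at x)"
    and cont: "\<And>i. i \<in> Basis \<Longrightarrow> continuous_on UNIV (\<lambda>x. D x i)"
  shows "C1 f"
proof -
  have bl: "\<And>x. bounded_linear (D x)" using deriv has_derivative_bounded_linear by blast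
  show ?thesis unfolding C1_def
  proof (intro exI[of _ "\<lambda>x. Blinfun (D x)"] conjI allI)
    fix x show "(f has_derivative blinfun_apply (Blinfun (D x))) (at x)"
      using deriv bl by (simp add: bounded_linear_Blinfun_apply)
  next
    show "continuous_on UNIV (\<lambda>x. Blinfun (D x))"
      by (rule continuous_on_blinfun_componentwise)
        (use cont bl in \<open>simp add: bounded_linear_Blinfun_apply\<close>)
  qed
qed

lemma C2I:
  fixes f :: "'a::euclidean_space \<Rightarrow> real"
  assumes deriv: "\<And>x. (f has_derivative D x) (at x)"
    and deriv2: "\<And>i x. i \<in> Basis \<Longrightarrow> ((\<lambda>x. D x i) has_derivative D2 x i) (at x)"
    and cont: "\<And>i j. i \<in> Basis \<Longrightarrow> j \<in> Basis \<Longrightarrow> continuous_on UNIV (\<lambda>x. D2 x i j)"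
  shows "C2 f"
proof -
  have bl: "\<And>x. bounded_linear (D x)" using deriv has_derivative_bounded_linear by blast
  have Blinfun_eq: "Blinfun (D x) = (\<Sum>i\<in>Basis. D x i *\<^sub>R blinfun_inner_left i)" for x
  proof (rule blinfun_eqI)
    fix v
    have "D x v = D x (\<Sum>i\<in>Basis. (v \<bullet> i) *\<^sub>R i)" by (simp add: euclidean_representation)
    also have "\<dots> = (\<Sum>i\<in>Basis. (v \<bullet> i) * D x i)"
      using bl[of x] by (simp add: linear_sum linear_scale bounded_linear.linear)
    finally show "blinfun_apply (Blinfun (D x)) v
        = blinfun_apply (\<Sum>i\<in>Basis. D x i *\<^sub>R blinfun_inner_left i) v"
      using bl by (simp add: bounded_linear_Blinfun_apply blinfun.sum_left mult.commute
          blinfun.scaleR_left)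
  qed
  show ?thesis unfolding C2_def
  proof (intro exI[of _ "\<lambda>x. Blinfun (D x)"] conjI allI)
    fix x show "(f has_derivative blinfun_apply (Blinfun (D x))) (at x)"
      using deriv bl by (simp add: bounded_linear_Blinfun_apply)
  next
    show "C1 (\<lambda>x. Blinfun (D x))"
      unfolding Blinfun_eq
    proof (rule C1I[where D="\<lambda>x v. \<Sum>i\<in>Basis. D2 x i v *\<^sub>R blinfun_inner_left i"])
      fix x
      show "((\<lambda>x. \<Sum>i\<in>Basis. D x i *\<^sub>R blinfun_inner_left i) has_derivative
          (\<lambda>v. \<Sum>i\<in>Basis. D2 x i v *\<^sub>R blinfun_inner_left i)) (at x)"
        by (intro has_derivative_sum has_derivative_scaleR_left deriv2)
    next
      fix j :: 'a assume "j \<in> Basis"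
      then show "continuous_on UNIV (\<lambda>x. \<Sum>i\<in>Basis. D2 x i j *\<^sub>R blinfun_inner_left i)"
        by (intro continuous_intros continuous_on_scaleR cont)
    qed
  qed
qed

section \<open>Polynomials in the edge vectors\<close>

definition dir_deriv :: "('a::real_normed_vector \<Rightarrow> 'b::real_normed_vector) \<Rightarrow> 'a \<Rightarrow> 'a \<Rightarrow> 'b" where
  "dir_deriv f v p = frechet_derivative f (at p) v"

lemma dir_deriv_eq: "(f has_derivative f') (at p) \<Longrightarrow> dir_deriv f v p = f' v"
  unfolding dir_deriv_def by (metis frechet_derivative_at)

lemma has_derivative_dir_deriv:
  "(f has_derivative f') (at p) \<Longrightarrow> (f has_derivative (\<lambda>v. dir_deriv f v p)) (at p)"
  unfolding dir_deriv_def by (metis frechet_derivative_at)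

text \<open>Polynomials in the edge vectors \<open>p$j - p$i\<close>, \<open>{i, j} \<in> E\<close>: unlike
  arbitrary polynomials on the configuration space, they are bounded on every sublevel set of
  \<open>\<psi>\<close>, which constrains only edge lengths.\<close>
inductive edge_poly :: "'v set set \<Rightarrow> (real^'n^'v \<Rightarrow> real) \<Rightarrow> bool" for E where
  const: "edge_poly E (\<lambda>p. c)"
| edge: "{i, j} \<in> E \<Longrightarrow> edge_poly E (\<lambda>p. (p$j - p$i) \<bullet> c)"
| add: "edge_poly E f \<Longrightarrow> edge_poly E g \<Longrightarrow> edge_poly E (\<lambda>p. f p + g p)"
| mult: "edge_poly E f \<Longrightarrow> edge_poly E g \<Longrightarrow> edge_poly E (\<lambda>p. f p * g p)"

lemma edge_poly_derivative_ex:
  "edge_poly E f \<Longrightarrow>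
    \<exists>f'. (\<forall>p. (f has_derivative f' p) (at p)) \<and> (\<forall>v. edge_poly E (\<lambda>p. f' p v))"
proof (induction rule: edge_poly.induct)
  case (const c)
  then show ?case by (intro exI[of _ "\<lambda>p v. 0"]) (auto intro: edge_poly.const)
next
  case (edge i j c)
  have "bounded_linear (\<lambda>p. (p$j - p$i) \<bullet> c)"
    by (intro bounded_linear_intros bounded_linear_vec_nth)
  then have "((\<lambda>p. (p$j - p$i) \<bullet> c) has_derivative (\<lambda>p. (p$j - p$i) \<bullet> c)) (at p)" for p
    by (rule bounded_linear_imp_has_derivative)
  then show ?case by (intro exI[of _ "\<lambda>p v. (v$j - v$i) \<bullet> c"]) (auto intro: edge_poly.const)
next
  case (add f g)
  then obtain f' g' where "\<forall>p. (f has_derivative f' p) (at p)" "\<forall>v. edge_poly E (\<lambda>p. f' p v)"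
    "\<forall>p. (g has_derivative g' p) (at p)" "\<forall>v. edge_poly E (\<lambda>p. g' p v)" by blast
  then show ?case
    by (intro exI[of _ "\<lambda>p v. f' p v + g' p v"]) (auto intro: edge_poly.add has_derivative_add)
next
  case (mult f g)
  then obtain f' g' where "\<forall>p. (f has_derivative f' p) (at p)" "\<forall>v. edge_poly E (\<lambda>p. f' p v)"
    "\<forall>p. (g has_derivative g' p) (at p)" "\<forall>v. edge_poly E (\<lambda>p. g' p v)" by blast
  with mult.hyps show ?case
    by (intro exI[of _ "\<lambda>p v. f p * g' p v + f' p v * g p"])
       (auto intro!: edge_poly.add edge_poly.mult has_derivative_mult)
qed

lemma edge_poly_has_derivative:
  "edge_poly E f \<Longrightarrow> (f has_derivative (\<lambda>v. dir_deriv f v p)) (at p)"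
  using edge_poly_derivative_ex has_derivative_dir_deriv by metis

lemma edge_poly_dir_deriv: "edge_poly E f \<Longrightarrow> edge_poly E (\<lambda>p. dir_deriv f v p)"
proof -
  assume "edge_poly E f"
  then obtain f' where "\<forall>p. (f has_derivative f' p) (at p)" "\<forall>v. edge_poly E (\<lambda>p. f' p v)"
    using edge_poly_derivative_ex by blast
  then show ?thesis using dir_deriv_eq by (metis (no_types, lifting) ext)
qed

lemma edge_poly_continuous: "edge_poly E f \<Longrightarrow> continuous_on UNIV f"
  by (induction rule: edge_poly.induct) (auto intro!: continuous_intros)

lemma edge_poly_isCont: "edge_poly E f \<Longrightarrow> isCont f p"
  using edge_poly_continuous continuous_on_eq_continuous_at open_UNIV by blast

lemma edge_poly_sum:
  "finite S \<Longrightarrow> (\<And>j. j \<in> S \<Longrightarrow> edge_poly E (f j)) \<Longrightarrow> edge_poly E (\<lambda>p. \<Sum>j\<in>S. f j p)"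
  by (induction S rule: finite_induct) (auto intro: edge_poly.intros)

lemma edge_poly_diff: "edge_poly E f \<Longrightarrow> edge_poly E g \<Longrightarrow> edge_poly E (\<lambda>p. f p - g p)"
proof -
  assume "edge_poly E f" "edge_poly E g"
  then have "edge_poly E (\<lambda>p. f p + (-1) * g p)" by (intro edge_poly.intros)
  then show ?thesis by simp
qed

lemma edge_poly_cmult: "edge_poly E f \<Longrightarrow> edge_poly E (\<lambda>p. c * f p)"
  by (intro edge_poly.intros)

lemma edge_poly_power2: "edge_poly E f \<Longrightarrow> edge_poly E (\<lambda>p. (f p)\<^sup>2)"
  by (simp add: power2_eq_square edge_poly.intros)

lemma dir_deriv_add:
  "edge_poly E f \<Longrightarrow> edge_poly E g \<Longrightarrow> dir_deriv (\<lambda>p. f p + g p) v p = dir_deriv f v p + dir_deriv g v p"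
  by (rule dir_deriv_eq) (intro has_derivative_add edge_poly_has_derivative)

lemma dir_deriv_mult:
  "edge_poly E f \<Longrightarrow> edge_poly E g \<Longrightarrow>
    dir_deriv (\<lambda>p. f p * g p) v p = f p * dir_deriv g v p + dir_deriv f v p * g p"
  by (rule dir_deriv_eq) (intro has_derivative_mult edge_poly_has_derivative)

lemma dir_deriv_power2: "edge_poly E f \<Longrightarrow> dir_deriv (\<lambda>p. (f p)\<^sup>2) v p = 2 * f p * dir_deriv f v p"
  using dir_deriv_mult[of E f f v p] by (simp add: power2_eq_square)

lemma dir_deriv_cmult: "edge_poly E f \<Longrightarrow> dir_deriv (\<lambda>p. c * f p) v p = c * dir_deriv f v p"
  by (rule dir_deriv_eq) (intro has_derivative_mult_right edge_poly_has_derivative)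

lemma dir_deriv_sum:
  "finite S \<Longrightarrow> (\<And>j. j \<in> S \<Longrightarrow> edge_poly E (f j)) \<Longrightarrow>
    dir_deriv (\<lambda>p. \<Sum>j\<in>S. f j p) v p = (\<Sum>j\<in>S. dir_deriv (f j) v p)"
  by (rule dir_deriv_eq) (intro has_derivative_sum edge_poly_has_derivative, auto)

lemma dir_deriv_scaleR: "edge_poly E f \<Longrightarrow> dir_deriv f (c *\<^sub>R v) p = c * dir_deriv f v p"
  using linear_cmul[OF has_derivative_linear[OF edge_poly_has_derivative]] by simp

definition bounded_edges :: "'v set set \<Rightarrow> real \<Rightarrow> (real^'n^'v) set" where
  "bounded_edges E M = {p. \<forall>i j. {i, j} \<in> E \<longrightarrow> norm (p$j - p$i) \<le> M}"

lemma edge_poly_bounded: "edge_poly E f \<Longrightarrow> \<exists>C. \<forall>p\<in>bounded_edges E M. \<bar>f p\<bar> \<le> C"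
proof (induction rule: edge_poly.induct)
  case (const c) then show ?case by auto
next
  case (edge i j c)
  have "\<bar>(p$j - p$i) \<bullet> c\<bar> \<le> M * norm c" if "p \<in> bounded_edges E M" for p
  proof -
    have "\<bar>(p$j - p$i) \<bullet> c\<bar> \<le> norm (p$j - p$i) * norm c" by (rule Cauchy_Schwarz_ineq2)
    also have "\<dots> \<le> M * norm c"
      using that edge unfolding bounded_edges_def by (auto intro: mult_right_mono)
    finally show ?thesis .
  qed
  then show ?case by blast
next
  case (add f g)
  then obtain C1 C2 where "\<forall>p\<in>bounded_edges E M. \<bar>f p\<bar> \<le> C1" "\<forall>p\<in>bounded_edges E M. \<bar>g p\<bar> \<le> C2"
    by blast
  then show ?case
    by (intro exI[of _ "C1 + C2"]) (auto intro!: order_trans[OF abs_triangle_ineq] add_mono)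
next
  case (mult f g)
  then obtain C1 C2 where "\<forall>p\<in>bounded_edges E M. \<bar>f p\<bar> \<le> C1" "\<forall>p\<in>bounded_edges E M. \<bar>g p\<bar> \<le> C2"
    by blast
  then show ?case
    by (intro exI[of _ "C1 * C2"]) (auto simp: abs_mult intro!: mult_mono order_trans[OF abs_ge_zero])
qed

lemma eventually_bounded_edges:
  fixes p :: "real^'n^'v::finite"
  shows "\<exists>M. \<forall>\<^sub>F q in at p. q \<in> bounded_edges E M"
proof -
  define M where "M = (\<Sum>ij\<in>UNIV. norm (p$snd ij - p$fst ij)) + 1"
  have le: "norm (p$j - p$i) + 1 \<le> M" for i j
    unfolding M_def using member_le_sum[of "(i,j)" UNIV "\<lambda>ij. norm (p$snd ij - p$fst ij)"] by auto
  have "\<forall>\<^sub>F q in at p. \<forall>ij. norm (q$snd ij - q$fst ij) < norm (p$snd ij - p$fst ij) + 1"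
  proof (rule eventually_all_finite)
    fix ij
    have "((\<lambda>q. norm (q$snd ij - q$fst ij)) \<longlongrightarrow> norm (p$snd ij - p$fst ij)) (at p)"
      by (intro tendsto_intros)
    then show "\<forall>\<^sub>F q in at p. norm (q$snd ij - q$fst ij) < norm (p$snd ij - p$fst ij) + 1"
      by (rule order_tendstoD) simp
  qed
  then have "\<forall>\<^sub>F q in at p. q \<in> bounded_edges E M"
  proof eventually_elim
    case (elim q)
    have "norm (q$j - q$i) \<le> M" for i j
      using elim[rule_format, of "(i, j)"] le[of j i] by simp
    then show ?case unfolding bounded_edges_def by blast
  qed
  then show ?thesis by blast
qed

section \<open>Sums of squares of edge polynomials\<close>

definition in_ideal :: "'v set set \<Rightarrow> 'j set \<Rightarrow> ('j \<Rightarrow> real^'n^'v \<Rightarrow> real) \<Rightarrow> (real^'n^'v \<Rightarrow> real) \<Rightarrow> bool" where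
  "in_ideal E J f w \<longleftrightarrow> (\<exists>k. (\<forall>j\<in>J. edge_poly E (k j)) \<and> (\<forall>p. w p = (\<Sum>j\<in>J. f j p * k j p)))"

locale sum_of_squares =
  fixes E :: "'v::finite set set" and J :: "'j set"
    and f :: "'j \<Rightarrow> real^'n::finite^'v \<Rightarrow> real" and \<phi> :: "real^'n^'v \<Rightarrow> real"
  assumes finite_J: "finite J"
    and edge_poly_f: "j \<in> J \<Longrightarrow> edge_poly E (f j)"
    and phi_eq: "\<phi> p = 1/4 * (\<Sum>j\<in>J. (f j p)\<^sup>2)"
begin

lemma phi_fun: "\<phi> = (\<lambda>p. 1/4 * (\<Sum>j\<in>J. (f j p)\<^sup>2))"
  using phi_eq by auto

lemma edge_poly_phi: "edge_poly E \<phi>"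
  unfolding phi_fun by (intro edge_poly_cmult edge_poly_sum edge_poly_power2 edge_poly_f finite_J)

lemma phi_nonneg: "\<phi> p \<ge> 0"
  unfolding phi_eq by (auto intro: sum_nonneg)

lemma sqrt_phi_square: "\<phi> p = sqrt (\<phi> p) * sqrt (\<phi> p)"
  using phi_nonneg[of p] by (simp add: real_sqrt_mult_self)

lemma abs_f_le: "j \<in> J \<Longrightarrow> \<bar>f j p\<bar> \<le> 2 * sqrt (\<phi> p)"
proof -
  assume j: "j \<in> J"
  have "(f j p)\<^sup>2 \<le> 4 * \<phi> p"
    unfolding phi_eq using member_le_sum[of j J "\<lambda>j. (f j p)\<^sup>2"] finite_J j by auto
  then have "sqrt ((f j p)\<^sup>2) \<le> sqrt (4 * \<phi> p)" by (rule real_sqrt_le_mono)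
  then show ?thesis by (simp add: real_sqrt_mult)
qed

lemma dir_deriv_phi: "dir_deriv \<phi> v p = (\<Sum>j\<in>J. f j p * (1/2 * dir_deriv (f j) v p))"
proof -
  have sq: "edge_poly E (\<lambda>p. \<Sum>j\<in>J. (f j p)\<^sup>2)"
    by (intro edge_poly_sum edge_poly_power2 edge_poly_f finite_J)
  have "dir_deriv \<phi> v p = 1/4 * dir_deriv (\<lambda>p. \<Sum>j\<in>J. (f j p)\<^sup>2) v p"
    unfolding phi_fun by (rule dir_deriv_cmult[OF sq])
  also have "dir_deriv (\<lambda>p. \<Sum>j\<in>J. (f j p)\<^sup>2) v p = (\<Sum>j\<in>J. dir_deriv (\<lambda>p. (f j p)\<^sup>2) v p)"
    by (rule dir_deriv_sum) (auto intro: finite_J edge_poly_power2 edge_poly_f)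
  also have "\<dots> = (\<Sum>j\<in>J. 2 * f j p * dir_deriv (f j) v p)"
    by (rule sum.cong) (auto simp: dir_deriv_power2[OF edge_poly_f])
  finally show ?thesis by (simp add: sum_distrib_left)
qed

lemma in_ideal_dir_deriv_phi: "in_ideal E J f (dir_deriv \<phi> v)"
  unfolding in_ideal_def
proof (intro exI[of _ "\<lambda>j p. 1/2 * dir_deriv (f j) v p"] conjI ballI allI)
  fix j assume "j \<in> J"
  then show "edge_poly E (\<lambda>p. 1/2 * dir_deriv (f j) v p)"
    by (intro edge_poly_cmult edge_poly_dir_deriv edge_poly_f)
qed (rule dir_deriv_phi)

lemma in_ideal_edge_poly: "in_ideal E J f w \<Longrightarrow> edge_poly E w"
proof -
  assume "in_ideal E J f w"
  then obtain k where k: "\<forall>j\<in>J. edge_poly E (k j)" "w = (\<lambda>p. \<Sum>j\<in>J. f j p * k j p)"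
    unfolding in_ideal_def by blast
  then show ?thesis using edge_poly_f finite_J by (auto intro!: edge_poly_sum edge_poly.mult)
qed

lemma in_ideal_zero: "in_ideal E J f w \<Longrightarrow> \<phi> p = 0 \<Longrightarrow> w p = 0"
proof -
  assume "in_ideal E J f w" "\<phi> p = 0"
  moreover from \<open>\<phi> p = 0\<close> have "j \<in> J \<Longrightarrow> f j p = 0" for j
    using abs_f_le[of j p] by simp
  ultimately show ?thesis unfolding in_ideal_def by auto
qed

lemma in_ideal_mult: "in_ideal E J f w \<Longrightarrow> edge_poly E c \<Longrightarrow> in_ideal E J f (\<lambda>p. w p * c p)"
proof -
  assume "in_ideal E J f w" "edge_poly E c"
  then obtain k where k: "\<forall>j\<in>J. edge_poly E (k j)" "\<forall>p. w p = (\<Sum>j\<in>J. f j p * k j p)"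
    unfolding in_ideal_def by blast
  show ?thesis unfolding in_ideal_def
    using k \<open>edge_poly E c\<close>
    by (intro exI[of _ "\<lambda>j p. k j p * c p"])
      (auto intro: edge_poly.mult simp: sum_distrib_right mult.assoc)
qed

lemma in_ideal_add: "in_ideal E J f w \<Longrightarrow> in_ideal E J f w' \<Longrightarrow> in_ideal E J f (\<lambda>p. w p + w' p)"
proof -
  assume "in_ideal E J f w" "in_ideal E J f w'"
  then obtain k k' where k: "\<forall>j\<in>J. edge_poly E (k j)" "\<forall>p. w p = (\<Sum>j\<in>J. f j p * k j p)"
    and k': "\<forall>j\<in>J. edge_poly E (k' j)" "\<forall>p. w' p = (\<Sum>j\<in>J. f j p * k' j p)"
    unfolding in_ideal_def by blast
  have "\<forall>j\<in>J. edge_poly E (\<lambda>p. k j p + k' j p)" using k(1) k'(1) by (blast intro: edge_poly.add)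
  moreover have "w p + w' p = (\<Sum>j\<in>J. f j p * (k j p + k' j p))" for p
    using k(2) k'(2) by (simp add: sum.distrib distrib_left)
  ultimately show ?thesis
    unfolding in_ideal_def by (intro exI[of _ "\<lambda>j p. k j p + k' j p"]) blast
qed

lemma in_ideal_bounded:
  assumes "in_ideal E J f w"
  shows "\<exists>C. \<forall>p\<in>bounded_edges E M. \<bar>w p\<bar> \<le> C * sqrt (\<phi> p)"
proof -
  obtain k where k: "\<forall>j\<in>J. edge_poly E (k j)" "\<forall>p. w p = (\<Sum>j\<in>J. f j p * k j p)"
    using assms unfolding in_ideal_def by blast
  have "\<forall>j\<in>J. \<exists>C. \<forall>p\<in>bounded_edges E M. \<bar>k j p\<bar> \<le> C"
    using k edge_poly_bounded by blast
  then obtain C where C: "\<forall>j\<in>J. \<forall>p\<in>bounded_edges E M. \<bar>k j p\<bar> \<le> C j"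
    by metis
  have "\<bar>w p\<bar> \<le> (\<Sum>j\<in>J. 2 * \<bar>C j\<bar>) * sqrt (\<phi> p)" if p: "p \<in> bounded_edges E M" for p
  proof -
    have "\<bar>w p\<bar> \<le> (\<Sum>j\<in>J. \<bar>f j p * k j p\<bar>)" using k by (simp add: sum_abs)
    also have "\<dots> \<le> (\<Sum>j\<in>J. 2 * \<bar>C j\<bar> * sqrt (\<phi> p))"
    proof (rule sum_mono)
      fix j assume j: "j \<in> J"
      have "\<bar>f j p\<bar> * \<bar>k j p\<bar> \<le> (2 * sqrt (\<phi> p)) * \<bar>C j\<bar>"
      proof (rule mult_mono)
        show "\<bar>k j p\<bar> \<le> \<bar>C j\<bar>" using C j p by force
      qed (use abs_f_le[OF j, of p] phi_nonneg[of p] in auto)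
      then show "\<bar>f j p * k j p\<bar> \<le> 2 * \<bar>C j\<bar> * sqrt (\<phi> p)"
        by (simp add: abs_mult algebra_simps)
    qed
    also have "\<dots> = (\<Sum>j\<in>J. 2 * \<bar>C j\<bar>) * sqrt (\<phi> p)" by (simp add: sum_distrib_right)
    finally show ?thesis .
  qed
  then show ?thesis by blast
qed

lemma in_ideal_eventually_bounded:
  "in_ideal E J f w \<Longrightarrow> \<exists>C. \<forall>\<^sub>F q in at p. \<bar>w q\<bar> \<le> C * sqrt (\<phi> q)"
proof -
  assume "in_ideal E J f w"
  obtain M where M: "\<forall>\<^sub>F q in at p. q \<in> bounded_edges E M"
    using eventually_bounded_edges by blast
  obtain C where "\<forall>q\<in>bounded_edges E M. \<bar>w q\<bar> \<le> C * sqrt (\<phi> q)"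
    using in_ideal_bounded[OF \<open>in_ideal E J f w\<close>] by blast
  with M show ?thesis by (blast intro: eventually_mono)
qed

lemma phi_tendsto_0: "\<phi> p = 0 \<Longrightarrow> (\<phi> \<longlongrightarrow> 0) (at p)"
  using edge_poly_isCont[OF edge_poly_phi, of p] by (simp add: isCont_def)

lemma sqrt_phi_tendsto_0: "\<phi> p = 0 \<Longrightarrow> ((\<lambda>q. sqrt (\<phi> q)) \<longlongrightarrow> 0) (at p)"
  using tendsto_real_sqrt[OF phi_tendsto_0] by simp

lemma eventually_phi_less: "\<phi> p = 0 \<Longrightarrow> c > 0 \<Longrightarrow> \<forall>\<^sub>F q in at p. \<phi> q < c"
  using order_tendstoD(2)[OF phi_tendsto_0] by blast

end

section \<open>Admissible functions\<close>

lemma Bfun_at_right_0_bounded: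
  fixes k :: "real \<Rightarrow> real"
  assumes "Bfun k (at_right 0)" and cont: "continuous_on {0<..} k"
  shows "\<exists>K. \<forall>y. 0 < y \<and> y \<le> R \<longrightarrow> \<bar>k y\<bar> \<le> K"
proof -
  obtain K0 where "K0 > 0" "eventually (\<lambda>y. norm (k y) \<le> K0) (at_right 0)"
    using assms(1) unfolding Bfun_def by blast
  then obtain b where b: "b > 0" "\<And>y. y > 0 \<Longrightarrow> y < b \<Longrightarrow> \<bar>k y\<bar> \<le> K0"
    unfolding eventually_at_right_field by auto
  have "compact (k ` {b/2..R})"
    by (rule compact_continuous_image) (use b in \<open>auto intro: continuous_on_subset[OF cont]\<close>)
  then obtain K1 where K1: "\<forall>x\<in>k ` {b/2..R}. \<bar>x\<bar> \<le> K1"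
    using compact_imp_bounded bounded_real by metis
  have "\<bar>k y\<bar> \<le> max K0 K1" if "0 < y" "y \<le> R" for y
    using b K1 that by (cases "y < b") force+
  then show ?thesis by blast
qed

definition ext_deriv :: "(real \<Rightarrow> real) \<Rightarrow> real \<Rightarrow> real" where
  "ext_deriv g y = (if 0 < y then deriv g y else 0)"

definition ext_deriv2 :: "(real \<Rightarrow> real) \<Rightarrow> real \<Rightarrow> real" where
  "ext_deriv2 g y = (if 0 < y then deriv (deriv g) y else 0)"

locale admissible =
  fixes g :: "real \<Rightarrow> real"
  assumes admissible: "admissible_h g"
begin

lemma g_nonpos: "y \<le> 0 \<Longrightarrow> g y = 0"
  using admissible unfolding admissible_h_def by auto

lemma g_has_derivative: "y > 0 \<Longrightarrow> (g has_real_derivative deriv g y) (at y)"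
  using admissible unfolding admissible_h_def by (auto simp: DERIV_deriv_iff_field_differentiable)

lemma deriv_has_derivative: "y > 0 \<Longrightarrow> (deriv g has_real_derivative deriv (deriv g) y) (at y)"
  using admissible unfolding admissible_h_def by (auto simp: DERIV_deriv_iff_field_differentiable)

lemma continuous_on_deriv2: "continuous_on {0<..} (deriv (deriv g))"
  using admissible unfolding admissible_h_def by auto

lemma continuous_on_deriv: "continuous_on {0<..} (deriv g)"
proof -
  have "\<forall>y\<in>{0<..}. isCont (deriv g) y" using deriv_has_derivative DERIV_isCont by auto
  then show ?thesis by (simp add: continuous_at_imp_continuous_on)
qed

lemma continuous_on_g: "continuous_on {0<..} g"
proof -
  have "\<forall>y\<in>{0<..}. isCont g y" using g_has_derivative DERIV_isCont by auto
  then show ?thesis by (simp add: continuous_at_imp_continuous_on)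
qed

lemma g_linear_bound: "\<exists>K. \<forall>y. 0 \<le> y \<and> y \<le> R \<longrightarrow> \<bar>g y\<bar> \<le> K * y"
proof -
  have "\<exists>K. \<forall>y. 0 < y \<and> y \<le> R \<longrightarrow> \<bar>g y / y\<bar> \<le> K"
    by (rule Bfun_at_right_0_bounded)
      (use admissible continuous_on_g in \<open>auto simp: admissible_h_def intro!: continuous_intros\<close>)
  then obtain K where K: "\<forall>y. 0 < y \<and> y \<le> R \<longrightarrow> \<bar>g y / y\<bar> \<le> K" by blast
  have "\<bar>g y\<bar> \<le> K * y" if "0 \<le> y" "y \<le> R" for y
    using K that g_nonpos[of 0] by (cases "y = 0") (auto simp: abs_divide divide_le_eq)
  then show ?thesis by blast
qed

lemma ext_deriv_bounded: "\<exists>K. \<forall>y. y \<le> R \<longrightarrow> \<bar>ext_deriv g y\<bar> \<le> K"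
proof -
  obtain K where K: "\<forall>y. 0 < y \<and> y \<le> R \<longrightarrow> \<bar>deriv g y\<bar> \<le> K"
    using Bfun_at_right_0_bounded continuous_on_deriv admissible unfolding admissible_h_def by blast
  show ?thesis
    by (intro exI[of _ "max K 0"] allI impI) (use K in \<open>auto simp: ext_deriv_def le_max_iff_disj\<close>)
qed

lemma ext_deriv2_mult_bounded: "\<exists>K. \<forall>y. y \<le> R \<longrightarrow> \<bar>ext_deriv2 g y\<bar> * y \<le> K"
proof -
  have "\<exists>K. \<forall>y. 0 < y \<and> y \<le> R \<longrightarrow> \<bar>deriv (deriv g) y * y\<bar> \<le> K"
    by (rule Bfun_at_right_0_bounded)
      (use admissible continuous_on_deriv2 in \<open>auto simp: admissible_h_def intro!: continuous_intros\<close>)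
  then obtain K where K: "\<forall>y. 0 < y \<and> y \<le> R \<longrightarrow> \<bar>deriv (deriv g) y\<bar> * y \<le> K"
    by (auto simp: abs_mult)
  show ?thesis
    by (intro exI[of _ "max K 0"] allI impI) (use K in \<open>auto simp: ext_deriv2_def le_max_iff_disj\<close>)
qed

lemma isCont_g: "isCont g y"
proof -
  consider "y < 0" | "y = 0" | "y > 0" by linarith
  then show ?thesis
  proof cases
    case 1
    have "continuous_on {..<0} g" using g_nonpos continuous_on_cong[of "{..<0}" "{..<0}" g "\<lambda>_. 0"]
      by (simp add: continuous_on_const)
    then show ?thesis using 1 continuous_on_eq_continuous_at[of "{..<0::real}" g] by simp
  next
    case 2
    obtain K where K: "\<forall>z. 0 \<le> z \<and> z \<le> 1 \<longrightarrow> \<bar>g z\<bar> \<le> K * z" using g_linear_bound by blast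
    have "\<forall>\<^sub>F z in at 0. \<bar>z::real\<bar> < 1"
      using order_tendstoD(2)[OF tendsto_rabs_zero[OF tendsto_ident_at]] by simp
    then have "\<forall>\<^sub>F z in at 0. norm (g z) \<le> \<bar>K\<bar> * \<bar>z\<bar>"
    proof eventually_elim
      case (elim z)
      show ?case
      proof (cases "z > 0")
        case True
        then have "\<bar>g z\<bar> \<le> K * z" using K elim by auto
        also have "\<dots> \<le> \<bar>K\<bar> * \<bar>z\<bar>" by (simp add: abs_mult[symmetric])
        finally show ?thesis by simp
      next
        case False
        then show ?thesis using g_nonpos[of z] by (simp add: mult_le_0_iff)
      qed
    qed
    moreover have "((\<lambda>z. \<bar>K\<bar> * \<bar>z\<bar>) \<longlongrightarrow> 0) (at 0)" by (auto intro!: tendsto_eq_intros)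
    ultimately have "(g \<longlongrightarrow> 0) (at 0)" by (rule Lim_null_comparison)
    then show ?thesis using 2 g_nonpos[of 0] by (simp add: isCont_def)
  next
    case 3
    then show ?thesis using g_has_derivative DERIV_isCont by blast
  qed
qed

lemma ext_deriv_has_derivative:
  "y > 0 \<Longrightarrow> (ext_deriv g has_real_derivative deriv (deriv g) y) (at y)"
  by (rule has_field_derivative_transform_within_open[OF deriv_has_derivative, of y "{0<..}"])
    (auto simp: ext_deriv_def)

lemma isCont_ext_deriv2: "y > 0 \<Longrightarrow> isCont (ext_deriv2 g) y"
proof -
  assume y: "y > 0"
  then have "isCont (deriv (deriv g)) y"
    using continuous_on_deriv2 continuous_on_eq_continuous_at[OF open_greaterThan] by blast
  moreover have "\<forall>\<^sub>F z in nhds y. deriv (deriv g) z = ext_deriv2 g z"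
    using eventually_nhds_in_open[of "{0<..}" y] y by (auto simp: ext_deriv2_def elim: eventually_mono)
  ultimately show ?thesis by (rule isCont_cong[THEN iffD1, rotated])
qed

lemma abs_ext_deriv2_mult_le:
  assumes K: "\<forall>y\<le>R. \<bar>ext_deriv2 g y\<bar> * y \<le> K" and y: "0 \<le> y" "y \<le> R"
    and w: "\<bar>w\<bar> \<le> C * (y * sqrt y)"
  shows "\<bar>ext_deriv2 g y * w\<bar> \<le> \<bar>K\<bar> * \<bar>C\<bar> * sqrt y"
proof (cases "y > 0")
  case True
  have "\<bar>ext_deriv2 g y * w\<bar> \<le> \<bar>ext_deriv2 g y\<bar> * (\<bar>C\<bar> * (y * sqrt y))"
    unfolding abs_mult using w y
    by (intro mult_left_mono) (auto intro: order_trans[OF _ mult_right_mono[OF abs_ge_self]])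
  also have "\<dots> = (\<bar>ext_deriv2 g y\<bar> * y) * (\<bar>C\<bar> * sqrt y)" by (simp add: algebra_simps)
  also have "\<dots> \<le> \<bar>K\<bar> * (\<bar>C\<bar> * sqrt y)"
    using K y by (intro mult_right_mono) (auto intro: order_trans[OF _ abs_ge_self])
  finally show ?thesis by (simp add: algebra_simps)
next
  case False
  then show ?thesis using y by (simp add: ext_deriv2_def)
qed

end

lemma has_derivative_bounded_mult_zero:
  fixes a w :: "'a::real_normed_vector \<Rightarrow> real"
  assumes a: "\<forall>\<^sub>F q in at p. \<bar>a q\<bar> \<le> K" and w: "(w has_derivative (\<lambda>v. 0)) (at p)" and "w p = 0"
  shows "((\<lambda>q. a q * w q) has_derivative (\<lambda>v. 0)) (at p)"
proof -
  have "((\<lambda>y. norm (w y) / norm (y - p)) \<longlongrightarrow> 0) (at p)"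
    using w \<open>w p = 0\<close> unfolding has_derivative_iff_norm by simp
  then have l: "((\<lambda>y. \<bar>K\<bar> * (norm (w y) / norm (y - p))) \<longlongrightarrow> 0) (at p)"
    by (rule tendsto_mult_right_zero)
  have "((\<lambda>y. norm (a y * w y - a p * w p - 0) / norm (y - p)) \<longlongrightarrow> 0) (at p)"
  proof (rule Lim_null_comparison[OF _ l])
    show "\<forall>\<^sub>F y in at p. norm (norm (a y * w y - a p * w p - 0) / norm (y - p))
        \<le> \<bar>K\<bar> * (norm (w y) / norm (y - p))"
      using a
    proof eventually_elim
      case (elim y)
      have "\<bar>a y\<bar> * \<bar>w y\<bar> \<le> \<bar>K\<bar> * \<bar>w y\<bar>" using elim by (intro mult_right_mono) auto
      then show ?case using \<open>w p = 0\<close> by (simp add: abs_mult divide_right_mono)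
    qed
  qed
  then show ?thesis unfolding has_derivative_iff_norm by simp
qed

lemma tendsto_bounded_mult_zero:
  fixes a w :: "'a::topological_space \<Rightarrow> real"
  assumes a: "\<forall>\<^sub>F q in F. \<bar>a q\<bar> \<le> K" and w: "(w \<longlongrightarrow> 0) F"
  shows "((\<lambda>q. a q * w q) \<longlongrightarrow> 0) F"
proof -
  have l: "((\<lambda>y. \<bar>K\<bar> * \<bar>w y\<bar>) \<longlongrightarrow> 0) F"
    using w by (auto intro: tendsto_mult_right_zero tendsto_rabs_zero)
  show ?thesis
  proof (rule Lim_null_comparison[OF _ l])
    show "\<forall>\<^sub>F y in F. norm (a y * w y) \<le> \<bar>K\<bar> * \<bar>w y\<bar>"
      using a by eventually_elim (auto simp: abs_mult intro: mult_right_mono)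
  qed
qed

locale admissible_sos = admissible g + sum_of_squares E J f \<phi>
  for g E J and f :: "'j \<Rightarrow> real^'n::finite^'v::finite \<Rightarrow> real" and \<phi>
begin

lemma dir_deriv_phi_zero: "\<phi> p = 0 \<Longrightarrow> dir_deriv \<phi> v p = 0"
  using in_ideal_zero[OF in_ideal_dir_deriv_phi] by blast

lemma isCont_comp_phi: "isCont u (\<phi> p) \<Longrightarrow> isCont (\<lambda>q. u (\<phi> q)) p"
  using continuous_at_compose[OF edge_poly_isCont[OF edge_poly_phi]] by (simp add: o_def)

lemma eventually_ext_deriv_phi_bounded:
  "\<phi> p = 0 \<Longrightarrow> \<exists>K. \<forall>\<^sub>F q in at p. \<bar>ext_deriv g (\<phi> q)\<bar> \<le> K"
proof -
  assume "\<phi> p = 0"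
  obtain K where K: "\<forall>y. y \<le> 1 \<longrightarrow> \<bar>ext_deriv g y\<bar> \<le> K" using ext_deriv_bounded by blast
  have "\<forall>\<^sub>F q in at p. \<phi> q < 1" using eventually_phi_less[OF \<open>\<phi> p = 0\<close>] by simp
  then have "\<forall>\<^sub>F q in at p. \<bar>ext_deriv g (\<phi> q)\<bar> \<le> K" by (rule eventually_mono) (use K in auto)
  then show ?thesis by blast
qed

text \<open>At a zero of \<open>\<phi>\<close> the chain rule is not available; there \<open>g(\<phi> q) = a q * \<phi> q\<close>
  with \<open>a\<close> bounded, and \<open>\<phi>\<close> has derivative 0.\<close>
lemma g_phi_has_derivative:
  "((\<lambda>q. g (\<phi> q)) has_derivative (\<lambda>v. ext_deriv g (\<phi> p) * dir_deriv \<phi> v p)) (at p)"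
proof (cases "\<phi> p > 0")
  case True
  have "(g has_derivative (\<lambda>x. deriv g (\<phi> p) * x)) (at (\<phi> p))"
    using g_has_derivative[OF True] by (simp add: has_field_derivative_def)
  from has_derivative_compose[OF edge_poly_has_derivative[OF edge_poly_phi] this]
  show ?thesis using True by (simp add: ext_deriv_def)
next
  case False
  then have z: "\<phi> p = 0" using phi_nonneg[of p] by simp
  define a where "a q = (if \<phi> q > 0 then g (\<phi> q) / \<phi> q else 0)" for q
  have g_eq: "g (\<phi> q) = a q * \<phi> q" for q
    using phi_nonneg[of q] g_nonpos[of 0] by (cases "\<phi> q > 0") (auto simp: a_def)
  obtain K where K: "\<forall>y. 0 \<le> y \<and> y \<le> 1 \<longrightarrow> \<bar>g y\<bar> \<le> K * y" using g_linear_bound by blast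
  have "\<forall>\<^sub>F q in at p. \<phi> q < 1" using eventually_phi_less[OF z] by simp
  then have a_bounded: "\<forall>\<^sub>F q in at p. \<bar>a q\<bar> \<le> \<bar>K\<bar>"
  proof (rule eventually_mono)
    fix q assume q: "\<phi> q < 1"
    show "\<bar>a q\<bar> \<le> \<bar>K\<bar>"
    proof (cases "\<phi> q > 0")
      case True
      then have "\<bar>g (\<phi> q)\<bar> \<le> K * \<phi> q" using K q by auto
      also have "\<dots> \<le> \<bar>K\<bar> * \<phi> q" using True by (intro mult_right_mono) auto
      finally show ?thesis using True by (auto simp: a_def abs_divide divide_le_eq)
    qed (simp add: a_def)
  qed
  have "(\<phi> has_derivative (\<lambda>v. 0)) (at p)"
    using edge_poly_has_derivative[OF edge_poly_phi, of p] dir_deriv_phi_zero[OF z] by simp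
  from has_derivative_bounded_mult_zero[OF a_bounded this z]
  show ?thesis using z by (simp add: g_eq ext_deriv_def)
qed

lemma isCont_g_phi: "isCont (\<lambda>q. g (\<phi> q)) p"
  by (rule isCont_comp_phi[OF isCont_g])

lemma isCont_ext_deriv_mult:
  assumes w: "isCont w p" and w_zero: "\<phi> p = 0 \<Longrightarrow> w p = 0"
  shows "isCont (\<lambda>q. ext_deriv g (\<phi> q) * w q) p"
proof (cases "\<phi> p > 0")
  case True
  then have "isCont (ext_deriv g) (\<phi> p)"
    using ext_deriv_has_derivative DERIV_isCont by blast
  then show ?thesis using w by (intro continuous_intros isCont_comp_phi)
next
  case False
  then have z: "\<phi> p = 0" using phi_nonneg[of p] by simp
  obtain K where K: "\<forall>\<^sub>F q in at p. \<bar>ext_deriv g (\<phi> q)\<bar> \<le> K"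
    using eventually_ext_deriv_phi_bounded[OF z] by blast
  have "(w \<longlongrightarrow> 0) (at p)" using w w_zero[OF z] by (simp add: isCont_def)
  then have "((\<lambda>q. ext_deriv g (\<phi> q) * w q) \<longlongrightarrow> 0) (at p)"
    by (rule tendsto_bounded_mult_zero[OF K])
  then show ?thesis using z by (simp add: isCont_def ext_deriv_def)
qed

lemma ext_deriv_mult_has_derivative:
  assumes w: "edge_poly E w" and w_zero: "\<And>p v. \<phi> p = 0 \<Longrightarrow> w p = 0 \<and> dir_deriv w v p = 0"
  shows "((\<lambda>q. ext_deriv g (\<phi> q) * w q) has_derivative
     (\<lambda>v. ext_deriv2 g (\<phi> p) * dir_deriv \<phi> v p * w p + ext_deriv g (\<phi> p) * dir_deriv w v p)) (at p)"
proof (cases "\<phi> p > 0")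
  case True
  have "(ext_deriv g has_derivative (\<lambda>x. deriv (deriv g) (\<phi> p) * x)) (at (\<phi> p))"
    using ext_deriv_has_derivative[OF True] by (simp add: has_field_derivative_def)
  from has_derivative_compose[OF edge_poly_has_derivative[OF edge_poly_phi] this]
  have "((\<lambda>q. ext_deriv g (\<phi> q)) has_derivative (\<lambda>v. ext_deriv2 g (\<phi> p) * dir_deriv \<phi> v p)) (at p)"
    using True by (simp add: ext_deriv2_def)
  from has_derivative_mult[OF this edge_poly_has_derivative[OF w]]
  show ?thesis by (simp add: algebra_simps)
next
  case False
  then have z: "\<phi> p = 0" using phi_nonneg[of p] by simp
  obtain K where K: "\<forall>\<^sub>F q in at p. \<bar>ext_deriv g (\<phi> q)\<bar> \<le> K"
    using eventually_ext_deriv_phi_bounded[OF z] by blast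
  have "(w has_derivative (\<lambda>v. 0)) (at p)"
    using edge_poly_has_derivative[OF w, of p] w_zero[OF z] by simp
  from has_derivative_bounded_mult_zero[OF K this]
  show ?thesis using z w_zero[OF z] by (simp add: ext_deriv_def ext_deriv2_def)
qed

text \<open>At a zero of \<open>\<phi>\<close> continuity follows from the bound on \<open>ext_deriv2 g y * y\<close>,
  which is why \<open>w\<close> has to be of order \<open>\<phi> powr (3/2)\<close>.\<close>
lemma isCont_ext_deriv2_mult:
  assumes w: "isCont w p"
    and w_small: "\<phi> p = 0 \<Longrightarrow> w p = 0 \<and> (\<exists>C. \<forall>\<^sub>F q in at p. \<bar>w q\<bar> \<le> C * (\<phi> q * sqrt (\<phi> q)))"
  shows "isCont (\<lambda>q. ext_deriv2 g (\<phi> q) * w q) p"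
proof (cases "\<phi> p > 0")
  case True
  then show ?thesis using w by (intro continuous_intros isCont_comp_phi isCont_ext_deriv2)
next
  case False
  then have z: "\<phi> p = 0" using phi_nonneg[of p] by simp
  obtain C where C: "\<forall>\<^sub>F q in at p. \<bar>w q\<bar> \<le> C * (\<phi> q * sqrt (\<phi> q))" using w_small[OF z] by blast
  obtain K where K: "\<forall>y\<le>1. \<bar>ext_deriv2 g y\<bar> * y \<le> K" using ext_deriv2_mult_bounded by blast
  have small: "\<forall>\<^sub>F q in at p. \<phi> q < 1" using eventually_phi_less[OF z] by simp
  have "\<forall>\<^sub>F q in at p. norm (ext_deriv2 g (\<phi> q) * w q) \<le> \<bar>K\<bar> * \<bar>C\<bar> * sqrt (\<phi> q)"
    using C small
    by eventually_elim (auto intro: abs_ext_deriv2_mult_le[OF K] simp: phi_nonneg less_imp_le)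
  moreover have "((\<lambda>q. (\<bar>K\<bar> * \<bar>C\<bar>) * sqrt (\<phi> q)) \<longlongrightarrow> 0) (at p)"
    by (rule tendsto_mult_right_zero[OF sqrt_phi_tendsto_0[OF z]])
  ultimately have "((\<lambda>q. ext_deriv2 g (\<phi> q) * w q) \<longlongrightarrow> 0) (at p)"
    by (rule Lim_null_comparison)
  then show ?thesis using z by (simp add: isCont_def ext_deriv2_def)
qed

end

text \<open>In the application \<open>\<phi> = \<psi>\<^sub>i\<close>, \<open>A = D\<psi>\<^sub>i B\<^sub>i\<^sub>,\<^sub>k\<close> and \<open>g = h\<^sub>\<nu>\<close>, so that
  \<open>g (\<phi> p) * A p\<close> is \<open>X\<^sub>m \<psi>\<close>.\<close>
locale admissible_sos_ideal = admissible_sos g E J f \<phi> for g E J f \<phi> +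
  fixes A
  assumes in_ideal_A: "in_ideal E J f A"
begin

definition dphi_A where "dphi_A v p = dir_deriv \<phi> v p * A p"

definition gA_deriv where
  "gA_deriv v p = ext_deriv g (\<phi> p) * dphi_A v p + g (\<phi> p) * dir_deriv A v p"

definition gA_deriv2 where
  "gA_deriv2 v w p =
    (ext_deriv2 g (\<phi> p) * dir_deriv \<phi> w p * dphi_A v p + ext_deriv g (\<phi> p) * dir_deriv (dphi_A v) w p)
    + (ext_deriv g (\<phi> p) * dir_deriv \<phi> w p * dir_deriv A v p + g (\<phi> p) * dir_deriv (dir_deriv A v) w p)"

lemma edge_poly_A: "edge_poly E A"
  by (rule in_ideal_edge_poly[OF in_ideal_A])

lemma A_zero: "\<phi> p = 0 \<Longrightarrow> A p = 0"
  by (rule in_ideal_zero[OF in_ideal_A])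

lemma edge_poly_dphi_A: "edge_poly E (dphi_A v)"
  unfolding dphi_A_def[abs_def] by (rule edge_poly.mult[OF edge_poly_dir_deriv[OF edge_poly_phi] edge_poly_A])

lemma dir_deriv_dphi_A:
  "dir_deriv (dphi_A v) w p = dir_deriv \<phi> v p * dir_deriv A w p + dir_deriv (dir_deriv \<phi> v) w p * A p"
  unfolding dphi_A_def[abs_def] by (rule dir_deriv_mult[OF edge_poly_dir_deriv[OF edge_poly_phi] edge_poly_A])

lemma dphi_A_zero: "\<phi> p = 0 \<Longrightarrow> dphi_A v p = 0 \<and> dir_deriv (dphi_A v) w p = 0"
  unfolding dir_deriv_dphi_A by (simp add: dphi_A_def dir_deriv_phi_zero A_zero)

lemma in_ideal_dir_deriv_dphi_A: "in_ideal E J f (dir_deriv (dphi_A v) w)"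
proof -
  have "in_ideal E J f (\<lambda>p. dir_deriv \<phi> v p * dir_deriv A w p + A p * dir_deriv (dir_deriv \<phi> v) w p)"
    by (intro in_ideal_add in_ideal_mult in_ideal_dir_deriv_phi in_ideal_A
        edge_poly_dir_deriv edge_poly_A edge_poly_phi)
  moreover have "dir_deriv (dphi_A v) w
      = (\<lambda>p. dir_deriv \<phi> v p * dir_deriv A w p + A p * dir_deriv (dir_deriv \<phi> v) w p)"
    by (simp add: fun_eq_iff dir_deriv_dphi_A)
  ultimately show ?thesis by simp
qed

lemma gA_has_derivative: "((\<lambda>p. g (\<phi> p) * A p) has_derivative (\<lambda>v. gA_deriv v p)) (at p)"
  using has_derivative_mult[OF g_phi_has_derivative edge_poly_has_derivative[OF edge_poly_A]]
  by (simp add: gA_deriv_def dphi_A_def algebra_simps)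

lemma gA_deriv_has_derivative: "(gA_deriv v has_derivative (\<lambda>w. gA_deriv2 v w p)) (at p)"
proof -
  have t1: "((\<lambda>q. ext_deriv g (\<phi> q) * dphi_A v q) has_derivative
     (\<lambda>w. ext_deriv2 g (\<phi> p) * dir_deriv \<phi> w p * dphi_A v p + ext_deriv g (\<phi> p) * dir_deriv (dphi_A v) w p))
     (at p)"
    by (rule ext_deriv_mult_has_derivative[OF edge_poly_dphi_A dphi_A_zero])
  have t2: "((\<lambda>q. g (\<phi> q) * dir_deriv A v q) has_derivative
      (\<lambda>w. g (\<phi> p) * dir_deriv (dir_deriv A v) w p + ext_deriv g (\<phi> p) * dir_deriv \<phi> w p * dir_deriv A v p))
      (at p)"
    using has_derivative_mult[OF g_phi_has_derivative edge_poly_has_derivative[OF edge_poly_dir_deriv[OF edge_poly_A]]]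
    by simp
  show ?thesis unfolding gA_deriv_def[abs_def] gA_deriv2_def
    using has_derivative_add[OF t1 t2] by (simp add: algebra_simps)
qed

lemma isCont_gA_deriv: "isCont (gA_deriv v) p"
proof -
  have "isCont (\<lambda>q. ext_deriv g (\<phi> q) * dphi_A v q) p"
    by (rule isCont_ext_deriv_mult) (use edge_poly_isCont[OF edge_poly_dphi_A] dphi_A_zero in auto)
  moreover have "isCont (\<lambda>q. g (\<phi> q) * dir_deriv A v q) p"
    by (intro continuous_intros isCont_g_phi edge_poly_isCont[OF edge_poly_dir_deriv[OF edge_poly_A]])
  ultimately show ?thesis unfolding gA_deriv_def[abs_def] by (rule isCont_add)
qed

lemma eventually_dir_deriv_phi_dphi_A_bounded:
  "\<exists>C. \<forall>\<^sub>F q in at p. \<bar>dir_deriv \<phi> w q * dphi_A v q\<bar> \<le> C * (\<phi> q * sqrt (\<phi> q))"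
proof -
  obtain C1 where C1: "\<forall>\<^sub>F q in at p. \<bar>dir_deriv \<phi> w q\<bar> \<le> C1 * sqrt (\<phi> q)"
    using in_ideal_eventually_bounded[OF in_ideal_dir_deriv_phi] by blast
  obtain C2 where C2: "\<forall>\<^sub>F q in at p. \<bar>dir_deriv \<phi> v q\<bar> \<le> C2 * sqrt (\<phi> q)"
    using in_ideal_eventually_bounded[OF in_ideal_dir_deriv_phi] by blast
  obtain C3 where C3: "\<forall>\<^sub>F q in at p. \<bar>A q\<bar> \<le> C3 * sqrt (\<phi> q)"
    using in_ideal_eventually_bounded[OF in_ideal_A] by blast
  have "\<forall>\<^sub>F q in at p. \<bar>dir_deriv \<phi> w q * dphi_A v q\<bar> \<le> (C1 * C2 * C3) * (\<phi> q * sqrt (\<phi> q))"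
    using C1 C2 C3
  proof eventually_elim
    case (elim q)
    have "\<bar>dir_deriv \<phi> w q * dphi_A v q\<bar> = \<bar>dir_deriv \<phi> w q\<bar> * \<bar>dir_deriv \<phi> v q\<bar> * \<bar>A q\<bar>"
      by (simp add: dphi_A_def abs_mult)
    also have "\<dots> \<le> (C1 * sqrt (\<phi> q)) * (C2 * sqrt (\<phi> q)) * (C3 * sqrt (\<phi> q))"
      using elim by (intro mult_mono) (auto intro: mult_nonneg_nonneg order_trans[OF abs_ge_zero])
    also have "\<dots> = (C1 * C2 * C3) * (\<phi> q * sqrt (\<phi> q))"
      by (subst (4) sqrt_phi_square) (simp add: algebra_simps)
    finally show ?case .
  qed
  then show ?thesis by blast
qed

lemma isCont_gA_deriv2: "isCont (gA_deriv2 v w) p"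
proof -
  have "isCont (\<lambda>q. ext_deriv2 g (\<phi> q) * (dir_deriv \<phi> w q * dphi_A v q)) p"
  proof (rule isCont_ext_deriv2_mult)
    show "isCont (\<lambda>q. dir_deriv \<phi> w q * dphi_A v q) p"
      by (intro continuous_intros edge_poly_isCont[OF edge_poly_dir_deriv[OF edge_poly_phi]]
          edge_poly_isCont[OF edge_poly_dphi_A])
  qed (use dphi_A_zero eventually_dir_deriv_phi_dphi_A_bounded in auto)
  moreover have "isCont (\<lambda>q. ext_deriv g (\<phi> q) * dir_deriv (dphi_A v) w q) p"
    by (rule isCont_ext_deriv_mult)
      (use edge_poly_isCont[OF edge_poly_dir_deriv[OF edge_poly_dphi_A]] dphi_A_zero in auto)
  moreover have "isCont (\<lambda>q. ext_deriv g (\<phi> q) * (dir_deriv \<phi> w q * dir_deriv A v q)) p"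
    by (rule isCont_ext_deriv_mult)
      (auto intro!: continuous_intros edge_poly_isCont[OF edge_poly_dir_deriv[OF edge_poly_phi]]
        edge_poly_isCont[OF edge_poly_dir_deriv[OF edge_poly_A]] simp: dir_deriv_phi_zero)
  moreover have "isCont (\<lambda>q. g (\<phi> q) * dir_deriv (dir_deriv A v) w q) p"
    by (intro continuous_intros isCont_g_phi
        edge_poly_isCont[OF edge_poly_dir_deriv[OF edge_poly_dir_deriv[OF edge_poly_A]]])
  ultimately have "isCont (\<lambda>q. ext_deriv2 g (\<phi> q) * (dir_deriv \<phi> w q * dphi_A v q)
      + ext_deriv g (\<phi> q) * dir_deriv (dphi_A v) w q
      + (ext_deriv g (\<phi> q) * (dir_deriv \<phi> w q * dir_deriv A v q)
      + g (\<phi> q) * dir_deriv (dir_deriv A v) w q)) p"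
    by (intro isCont_add)
  then show ?thesis by (simp add: gA_deriv2_def[abs_def] mult.assoc)
qed

end

section \<open>Growth bounds\<close>

definition bounded_by :: "'a set \<Rightarrow> ('a \<Rightarrow> real) \<Rightarrow> ('a \<Rightarrow> real) \<Rightarrow> bool" where
  "bounded_by S t f \<longleftrightarrow> (\<forall>p\<in>S. 0 \<le> t p) \<and> (\<exists>C\<ge>0. \<forall>p\<in>S. \<bar>f p\<bar> \<le> C * t p)"

lemma bounded_byI:
  "(\<And>p. p \<in> S \<Longrightarrow> 0 \<le> t p) \<Longrightarrow> (\<And>p. p \<in> S \<Longrightarrow> \<bar>f p\<bar> \<le> C * t p) \<Longrightarrow> bounded_by S t f"
  unfolding bounded_by_def
proof (intro conjI ballI exI[of _ "max C 0"])
  fix p assume "\<And>p. p \<in> S \<Longrightarrow> 0 \<le> t p" "\<And>p. p \<in> S \<Longrightarrow> \<bar>f p\<bar> \<le> C * t p" "p \<in> S"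
  then show "\<bar>f p\<bar> \<le> max C 0 * t p" by (meson max.cobounded1 mult_right_mono order_trans)
qed auto

lemma bounded_by_const: "bounded_by S (\<lambda>p. 1) (\<lambda>p. c)"
  by (rule bounded_byI[where C="\<bar>c\<bar>"]) auto

lemma bounded_by_mult:
  assumes "bounded_by S t1 f1" "bounded_by S t2 f2"
  shows "bounded_by S (\<lambda>p. t1 p * t2 p) (\<lambda>p. f1 p * f2 p)"
proof -
  obtain C1 C2 where C: "C1 \<ge> 0" "\<forall>p\<in>S. \<bar>f1 p\<bar> \<le> C1 * t1 p" "C2 \<ge> 0" "\<forall>p\<in>S. \<bar>f2 p\<bar> \<le> C2 * t2 p"
    "\<forall>p\<in>S. 0 \<le> t1 p" "\<forall>p\<in>S. 0 \<le> t2 p"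
    using assms unfolding bounded_by_def by blast
  show ?thesis
  proof (rule bounded_byI[where C="C1 * C2"])
    fix p assume p: "p \<in> S"
    then show "0 \<le> t1 p * t2 p" using C by simp
    have "\<bar>f1 p * f2 p\<bar> \<le> (C1 * t1 p) * (C2 * t2 p)"
      unfolding abs_mult using C p by (intro mult_mono) auto
    then show "\<bar>f1 p * f2 p\<bar> \<le> C1 * C2 * (t1 p * t2 p)" by (simp add: algebra_simps)
  qed
qed

lemma bounded_by_add:
  assumes "bounded_by S t f1" "bounded_by S t f2"
  shows "bounded_by S t (\<lambda>p. f1 p + f2 p)"
proof -
  obtain C1 C2 where C: "\<forall>p\<in>S. \<bar>f1 p\<bar> \<le> C1 * t p" "\<forall>p\<in>S. \<bar>f2 p\<bar> \<le> C2 * t p" "\<forall>p\<in>S. 0 \<le> t p"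
    using assms unfolding bounded_by_def by blast
  show ?thesis
  proof (rule bounded_byI[where C="C1 + C2"])
    fix p assume p: "p \<in> S"
    then show "0 \<le> t p" using C by simp
    have "\<bar>f1 p + f2 p\<bar> \<le> C1 * t p + C2 * t p" using C p by (meson abs_triangle_ineq add_mono order_trans)
    then show "\<bar>f1 p + f2 p\<bar> \<le> (C1 + C2) * t p" by (simp add: algebra_simps)
  qed
qed

lemma bounded_by_mono:
  assumes "bounded_by S t f" and le: "\<And>p. p \<in> S \<Longrightarrow> t p \<le> c * t' p"
    and nonneg: "\<And>p. p \<in> S \<Longrightarrow> 0 \<le> t' p"
  shows "bounded_by S t' f"
proof -
  obtain C where C: "C \<ge> 0" "\<forall>p\<in>S. \<bar>f p\<bar> \<le> C * t p" using assms(1) unfolding bounded_by_def by blast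
  show ?thesis
  proof (rule bounded_byI[where C="C * c", OF nonneg])
    fix p assume p: "p \<in> S"
    have "\<bar>f p\<bar> \<le> C * t p" using C p by auto
    also have "\<dots> \<le> C * (c * t' p)" using le[OF p] C by (intro mult_left_mono) auto
    finally show "\<bar>f p\<bar> \<le> C * c * t' p" by (simp add: algebra_simps)
  qed
qed

lemma bounded_by_cong: "bounded_by S t f \<Longrightarrow> (\<And>p. p \<in> S \<Longrightarrow> f p = f' p) \<Longrightarrow> bounded_by S t f'"
  unfolding bounded_by_def by auto

lemma bounded_by_imp_pos_const: "bounded_by S t f \<Longrightarrow> \<exists>c>0. \<forall>p. p \<in> S \<longrightarrow> \<bar>f p\<bar> \<le> c * t p"
proof -
  assume "bounded_by S t f"
  then obtain C where C: "C \<ge> 0" "\<forall>p\<in>S. \<bar>f p\<bar> \<le> C * t p" "\<forall>p\<in>S. 0 \<le> t p"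
    unfolding bounded_by_def by blast
  have "\<bar>f p\<bar> \<le> (C + 1) * t p" if "p \<in> S" for p
    using C that mult_right_mono[of C "C + 1" "t p"] by force
  then show ?thesis using C by (intro exI[of _ "C + 1"]) auto
qed

context admissible_sos_ideal
begin

context
  fixes S M R
  assumes S_bounded_edges: "S \<subseteq> bounded_edges E M" and phi_le_R: "\<forall>p\<in>S. \<phi> p \<le> R"
begin

lemma bounded_by_g_phi: "bounded_by S \<phi> (\<lambda>p. g (\<phi> p))"
proof -
  obtain K where K: "\<forall>y. 0 \<le> y \<and> y \<le> R \<longrightarrow> \<bar>g y\<bar> \<le> K * y" using g_linear_bound by blast
  show ?thesis by (rule bounded_byI[where C=K]) (use K phi_le_R phi_nonneg in auto)
qed

lemma bounded_by_ext_deriv_phi: "bounded_by S (\<lambda>p. 1) (\<lambda>p. ext_deriv g (\<phi> p))"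
proof -
  obtain K where K: "\<forall>y. y \<le> R \<longrightarrow> \<bar>ext_deriv g y\<bar> \<le> K" using ext_deriv_bounded by blast
  show ?thesis by (rule bounded_byI[where C=K]) (use K phi_le_R in auto)
qed

lemma bounded_by_sqrt_phi: "in_ideal E J f w \<Longrightarrow> bounded_by S (\<lambda>p. sqrt (\<phi> p)) w"
proof -
  assume "in_ideal E J f w"
  then obtain C where C: "\<forall>p\<in>bounded_edges E M. \<bar>w p\<bar> \<le> C * sqrt (\<phi> p)"
    using in_ideal_bounded by blast
  show ?thesis by (rule bounded_byI[where C=C]) (use C S_bounded_edges phi_nonneg in auto)
qed

lemma bounded_by_1: "edge_poly E c \<Longrightarrow> bounded_by S (\<lambda>p. 1) c"
proof -
  assume "edge_poly E c"
  then obtain C where C: "\<forall>p\<in>bounded_edges E M. \<bar>c p\<bar> \<le> C" using edge_poly_bounded by blast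
  show ?thesis by (rule bounded_byI[where C=C]) (use C S_bounded_edges in auto)
qed

lemma bounded_by_g_phi_sqrt: "bounded_by S (\<lambda>p. sqrt (\<phi> p)) (\<lambda>p. g (\<phi> p))"
proof (rule bounded_by_mono[OF bounded_by_g_phi])
  fix p assume "p \<in> S"
  have "\<phi> p = sqrt (\<phi> p) * sqrt (\<phi> p)" by (rule sqrt_phi_square)
  also have "\<dots> \<le> sqrt R * sqrt (\<phi> p)" using bspec[OF phi_le_R \<open>p \<in> S\<close>] phi_nonneg[of p] by (intro mult_right_mono) auto
  finally show "\<phi> p \<le> sqrt R * sqrt (\<phi> p)" .
qed (simp add: phi_nonneg)

lemma bounded_by_ext_deriv_dir_deriv:
  "bounded_by S (\<lambda>p. sqrt (\<phi> p)) (\<lambda>p. ext_deriv g (\<phi> p) * dir_deriv \<phi> v p)"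
  using bounded_by_mult[OF bounded_by_ext_deriv_phi bounded_by_sqrt_phi[OF in_ideal_dir_deriv_phi]] by simp

lemma bounded_by_gA: "bounded_by S (\<lambda>p. \<phi> p * sqrt (\<phi> p)) (\<lambda>p. g (\<phi> p) * A p)"
  by (rule bounded_by_mult[OF bounded_by_g_phi bounded_by_sqrt_phi[OF in_ideal_A]])

lemma bounded_by_gA_deriv: "bounded_by S \<phi> (gA_deriv v)"
proof -
  have "bounded_by S (\<lambda>p. sqrt (\<phi> p) * sqrt (\<phi> p)) (\<lambda>p. ext_deriv g (\<phi> p) * dir_deriv \<phi> v p * A p)"
    by (rule bounded_by_mult[OF bounded_by_ext_deriv_dir_deriv bounded_by_sqrt_phi[OF in_ideal_A]])
  then have 1: "bounded_by S \<phi> (\<lambda>p. ext_deriv g (\<phi> p) * dir_deriv \<phi> v p * A p)"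
    by (rule bounded_by_mono[where c=1]) (use sqrt_phi_square phi_nonneg in auto)
  have 2: "bounded_by S (\<lambda>p. \<phi> p * 1) (\<lambda>p. g (\<phi> p) * dir_deriv A v p)"
    by (rule bounded_by_mult[OF bounded_by_g_phi bounded_by_1[OF edge_poly_dir_deriv[OF edge_poly_A]]])
  have "bounded_by S \<phi> (\<lambda>p. ext_deriv g (\<phi> p) * dir_deriv \<phi> v p * A p + g (\<phi> p) * dir_deriv A v p)"
    by (rule bounded_by_add[OF 1]) (use 2 in simp)
  then show ?thesis by (rule bounded_by_cong) (simp add: gA_deriv_def dphi_A_def mult.assoc)
qed

lemma bounded_by_ext_deriv2_term:
  "bounded_by S (\<lambda>p. sqrt (\<phi> p)) (\<lambda>p. ext_deriv2 g (\<phi> p) * dir_deriv \<phi> w p * dphi_A v p)"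
proof -
  have "bounded_by S (\<lambda>p. sqrt (\<phi> p) * sqrt (\<phi> p) * sqrt (\<phi> p))
      (\<lambda>p. dir_deriv \<phi> w p * dir_deriv \<phi> v p * A p)"
    by (intro bounded_by_mult bounded_by_sqrt_phi in_ideal_dir_deriv_phi in_ideal_A)
  then obtain C where C: "\<forall>p\<in>S. \<bar>dir_deriv \<phi> w p * dphi_A v p\<bar> \<le> C * (\<phi> p * sqrt (\<phi> p))"
    unfolding bounded_by_def dphi_A_def by (metis sqrt_phi_square mult.assoc)
  obtain K where K: "\<forall>y\<le>R. \<bar>ext_deriv2 g y\<bar> * y \<le> K" using ext_deriv2_mult_bounded by blast
  show ?thesis
  proof (rule bounded_byI[where C="\<bar>K\<bar> * \<bar>C\<bar>"])
    fix p assume p: "p \<in> S"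
    show "0 \<le> sqrt (\<phi> p)" by (simp add: phi_nonneg)
    show "\<bar>ext_deriv2 g (\<phi> p) * dir_deriv \<phi> w p * dphi_A v p\<bar> \<le> \<bar>K\<bar> * \<bar>C\<bar> * sqrt (\<phi> p)"
      using abs_ext_deriv2_mult_le[OF K phi_nonneg bspec[OF phi_le_R p] bspec[OF C p]]
      by (simp add: mult.assoc)
  qed
qed

lemma bounded_by_gA_deriv2: "bounded_by S (\<lambda>p. sqrt (\<phi> p)) (gA_deriv2 v w)"
proof -
  have 2: "bounded_by S (\<lambda>p. 1 * sqrt (\<phi> p)) (\<lambda>p. ext_deriv g (\<phi> p) * dir_deriv (dphi_A v) w p)"
    by (rule bounded_by_mult[OF bounded_by_ext_deriv_phi bounded_by_sqrt_phi[OF in_ideal_dir_deriv_dphi_A]])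
  have 3: "bounded_by S (\<lambda>p. sqrt (\<phi> p) * 1)
      (\<lambda>p. ext_deriv g (\<phi> p) * dir_deriv \<phi> w p * dir_deriv A v p)"
    by (rule bounded_by_mult[OF bounded_by_ext_deriv_dir_deriv bounded_by_1[OF edge_poly_dir_deriv[OF edge_poly_A]]])
  have 4: "bounded_by S (\<lambda>p. sqrt (\<phi> p) * 1) (\<lambda>p. g (\<phi> p) * dir_deriv (dir_deriv A v) w p)"
    by (rule bounded_by_mult[OF bounded_by_g_phi_sqrt
          bounded_by_1[OF edge_poly_dir_deriv[OF edge_poly_dir_deriv[OF edge_poly_A]]]])
  show ?thesis unfolding gA_deriv2_def[abs_def]
    using 2 3 4 by (intro bounded_by_add bounded_by_ext_deriv2_term) auto
qed

end

end

section \<open>The potential of a graph\<close>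

lemma power2_norm_eq_sum_axis: "(norm (x::real^'n))\<^sup>2 = (\<Sum>k\<in>UNIV. (x \<bullet> axis k 1)\<^sup>2)"
proof -
  have "(norm x)\<^sup>2 = (\<Sum>k\<in>UNIV. x $ k * x $ k)" by (simp add: power2_norm_eq_inner inner_vec_def)
  then show ?thesis unfolding inner_axis by (simp add: power2_eq_square)
qed

lemma edge_term_doubleton:
  assumes "a \<noteq> c"
  shows "edge_term d p {a, c} = ((norm (p$c - p$a))\<^sup>2 - (d {a, c})\<^sup>2)\<^sup>2"
proof -
  define i where "i = (SOME i. i \<in> {a, c})"
  define j where "j = (SOME j. j \<in> {a, c} \<and> j \<noteq> i)"
  have i: "i \<in> {a, c}" unfolding i_def by (rule someI[of _ a]) simp
  have "\<exists>j. j \<in> {a, c} \<and> j \<noteq> i" using assms i by auto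
  then have j: "j \<in> {a, c} \<and> j \<noteq> i" unfolding j_def by (rule someI_ex)
  have "(i = a \<and> j = c) \<or> (i = c \<and> j = a)" using i j by auto
  then have "norm (p$j - p$i) = norm (p$c - p$a)" by (auto simp: norm_minus_commute)
  then show ?thesis unfolding edge_term_def Let_def i_def[symmetric] j_def[symmetric] by simp
qed

lemma edge_term_nonneg: "edge_term d p e \<ge> 0"
  unfolding edge_term_def Let_def by simp

locale graph =
  fixes E :: "'v::finite set set" and d :: "'v set \<Rightarrow> real"
  assumes card_edge: "\<forall>e\<in>E. card e = 2"
begin

definition nbrs where "nbrs i = {j. {i, j} \<in> E}"

definition edge_defect :: "'v \<Rightarrow> 'v \<Rightarrow> real^'n::finite^'v \<Rightarrow> real" where
  "edge_defect i j p = (norm (p$j - p$i))\<^sup>2 - (d {i, j})\<^sup>2"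

lemma edge_doubleton: "e \<in> E \<Longrightarrow> \<exists>a c. a \<noteq> c \<and> e = {a, c}"
  using card_edge card_2_iff by metis

lemma nbrs_neq: "j \<in> nbrs i \<Longrightarrow> j \<noteq> i"
  using card_edge unfolding nbrs_def by force

lemma edge_poly_edge_defect: "{i, j} \<in> E \<Longrightarrow> edge_poly E (edge_defect i j)"
proof -
  assume ij: "{i, j} \<in> E"
  have "edge_poly E (\<lambda>p::real^'n^'v. (\<Sum>k\<in>UNIV. ((p$j - p$i) \<bullet> axis k 1)\<^sup>2) - (d {i, j})\<^sup>2)"
    by (intro edge_poly_diff edge_poly_sum edge_poly_power2 edge_poly.edge[OF ij] edge_poly.const) auto
  then show ?thesis unfolding edge_defect_def[abs_def] power2_norm_eq_sum_axis .
qed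

lemma sum_of_squares_psi_i: "sum_of_squares E (nbrs i) (edge_defect i) (psi_i E d i)"
  by unfold_locales (auto simp: nbrs_def psi_i_def edge_defect_def intro: edge_poly_edge_defect)

lemma edge_poly_edge_term: "e \<in> E \<Longrightarrow> edge_poly E (\<lambda>p::real^'n^'v. edge_term d p e)"
proof -
  assume e: "e \<in> E"
  then obtain a c where ac: "a \<noteq> c" "e = {a, c}" using edge_doubleton by blast
  have "edge_poly E (\<lambda>p::real^'n^'v. (edge_defect a c p)\<^sup>2)"
    using edge_poly_edge_defect e ac by (intro edge_poly_power2) auto
  then show ?thesis using ac by (simp add: edge_term_doubleton edge_defect_def)
qed

definition psi_rest :: "'v \<Rightarrow> real^'n::finite^'v \<Rightarrow> real" where
  "psi_rest i p = 1/4 * (\<Sum>e\<in>{e\<in>E. i \<notin> e}. edge_term d p e)"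

lemma edge_poly_psi_rest: "edge_poly E (psi_rest i)"
  unfolding psi_rest_def[abs_def] by (intro edge_poly_cmult edge_poly_sum edge_poly_edge_term) auto

lemma psi_rest_nonneg: "psi_rest i p \<ge> 0"
  unfolding psi_rest_def by (auto intro: sum_nonneg edge_term_nonneg)

lemma sum_edges_at_vertex:
  "(\<Sum>e\<in>{e\<in>E. i \<in> e}. edge_term d p e) = (\<Sum>j\<in>nbrs i. ((norm (p$j - p$i))\<^sup>2 - (d {i, j})\<^sup>2)\<^sup>2)"
proof -
  have inj: "inj_on (\<lambda>j. {i, j}) (nbrs i)"
    by (rule inj_onI) (use nbrs_neq in \<open>auto simp: doubleton_eq_iff\<close>)
  have "{e\<in>E. i \<in> e} \<subseteq> (\<lambda>j. {i, j}) ` nbrs i"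
  proof
    fix e assume e: "e \<in> {e \<in> E. i \<in> e}"
    then obtain a c where "a \<noteq> c" "e = {a, c}" using edge_doubleton by blast
    then have "e = {i, if a = i then c else a}" using e by auto
    then show "e \<in> (\<lambda>j. {i, j}) ` nbrs i" using e unfolding nbrs_def by auto
  qed
  then have img: "(\<lambda>j. {i, j}) ` nbrs i = {e\<in>E. i \<in> e}" unfolding nbrs_def by auto
  have "(\<Sum>e\<in>{e\<in>E. i \<in> e}. edge_term d p e) = (\<Sum>j\<in>nbrs i. edge_term d p {i, j})"
    by (subst img[symmetric], rule sum.reindex[OF inj, unfolded o_def])
  also have "\<dots> = (\<Sum>j\<in>nbrs i. ((norm (p$j - p$i))\<^sup>2 - (d {i, j})\<^sup>2)\<^sup>2)"
    by (rule sum.cong) (auto dest: nbrs_neq simp: edge_term_doubleton)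
  finally show ?thesis .
qed

lemma psi_eq_psi_i_plus_rest: "psi E d p = psi_i E d i p + psi_rest i p"
proof -
  have "(\<Sum>e\<in>E. edge_term d p e)
      = (\<Sum>e\<in>{e\<in>E. i \<in> e}. edge_term d p e) + (\<Sum>e\<in>{e\<in>E. i \<notin> e}. edge_term d p e)"
    by (subst sum.union_disjoint[symmetric]) (auto intro: sum.cong)
  then show ?thesis
    unfolding psi_def psi_i_def psi_rest_def sum_edges_at_vertex nbrs_def by (simp add: algebra_simps)
qed

lemma psi_i_le_psi: "psi_i E d i p \<le> psi E d p"
  using psi_eq_psi_i_plus_rest[of p i] psi_rest_nonneg[of i p] by simp

lemma psi_nonneg: "psi E d p \<ge> 0"
  unfolding psi_def by (auto intro: sum_nonneg edge_term_nonneg)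

lemma edge_poly_psi: "edge_poly E (psi E d :: real^'n::finite^'v \<Rightarrow> real)"
proof -
  have "psi E d = (\<lambda>p::real^'n^'v. psi_i E d i p + psi_rest i p)" for i
    using psi_eq_psi_i_plus_rest by auto
  then show ?thesis
    using edge_poly.add[OF sum_of_squares.edge_poly_phi[OF sum_of_squares_psi_i] edge_poly_psi_rest]
    by metis
qed

lemma psi_rest_translate:
  fixes p :: "real^'n::finite^'v"
  shows "psi_rest i (p + t *\<^sub>R Bfield b i k) = psi_rest i p"
proof -
  have "edge_term d (p + t *\<^sub>R Bfield b i k) e = edge_term d p e" if e: "e \<in> E" "i \<notin> e" for e
  proof -
    obtain a c where ac: "a \<noteq> c" "e = {a, c}" using edge_doubleton e by blast
    then have "a \<noteq> i" "c \<noteq> i" using e by auto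
    then have "(p + t *\<^sub>R Bfield b i k) $ a = p $ a" "(p + t *\<^sub>R Bfield b i k) $ c = p $ c"
      by (auto simp: Bfield_def)
    then show ?thesis by (simp only: ac(2) edge_term_doubleton[OF ac(1)])
  qed
  then show ?thesis unfolding psi_rest_def by (intro arg_cong[where f="\<lambda>x. 1/4 * x"] sum.cong) auto
qed

lemma dir_deriv_psi_rest_Bfield: "dir_deriv (psi_rest i) (Bfield b i k) (p :: real^'n::finite^'v) = 0"
proof -
  let ?B = "Bfield b i k"
  have inner: "((\<lambda>t::real. p + t *\<^sub>R ?B) has_derivative (\<lambda>t. t *\<^sub>R ?B)) (at 0)"
    by (intro derivative_eq_intros) auto
  have outer: "(psi_rest i has_derivative (\<lambda>v. dir_deriv (psi_rest i) v p)) (at (p + 0 *\<^sub>R ?B))"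
    using edge_poly_has_derivative[OF edge_poly_psi_rest, of i p] by simp
  have "((\<lambda>t. psi_rest i (p + t *\<^sub>R ?B)) has_derivative (\<lambda>t. dir_deriv (psi_rest i) (t *\<^sub>R ?B) p)) (at 0)"
    by (rule has_derivative_compose[OF inner outer])
  moreover have "((\<lambda>t. psi_rest i (p + t *\<^sub>R ?B)) has_derivative (\<lambda>t. 0)) (at (0::real))"
    unfolding psi_rest_translate by simp
  ultimately have "(\<lambda>t. dir_deriv (psi_rest i) (t *\<^sub>R ?B) p) = (\<lambda>t. 0)"
    by (rule has_derivative_unique)
  then have "dir_deriv (psi_rest i) (1 *\<^sub>R ?B) p = 0" by metis
  then show ?thesis by simp
qed

lemma dir_deriv_psi_Bfield:
  "dir_deriv (psi E d) (Bfield b i k) (p :: real^'n::finite^'v) = dir_deriv (psi_i E d i) (Bfield b i k) p"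
proof -
  have "psi E d = (\<lambda>p::real^'n^'v. psi_i E d i p + psi_rest i p)"
    using psi_eq_psi_i_plus_rest by auto
  then show ?thesis
    using dir_deriv_add[OF sum_of_squares.edge_poly_phi[OF sum_of_squares_psi_i[of i]]
        edge_poly_psi_rest[of i], of "Bfield b i k" p]
      dir_deriv_psi_rest_Bfield[of i b k p] by simp
qed

definition sublevel :: "real \<Rightarrow> (real^'n::finite^'v) set" where
  "sublevel r = {p. psi E d p \<le> r}"

lemma sublevel_subset_bounded_edges:
  assumes "r \<ge> 0"
  shows "sublevel r \<subseteq> bounded_edges E (sqrt ((\<Sum>e\<in>E. (d e)\<^sup>2) + 2 * sqrt r))"
proof (clarsimp simp: sublevel_def bounded_edges_def)
  fix p :: "real^'n^'v" and i j assume pr: "psi E d p \<le> r" and ij: "{i, j} \<in> E"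
  have ne: "i \<noteq> j" using card_edge ij by force
  let ?x = "(norm (p$j - p$i))\<^sup>2 - (d {i, j})\<^sup>2"
  have "edge_term d p {i, j} \<le> (\<Sum>e\<in>E. edge_term d p e)"
    by (rule member_le_sum[OF ij]) (auto intro: edge_term_nonneg)
  then have "?x\<^sup>2 \<le> 4 * r" using pr ne unfolding psi_def by (simp add: edge_term_doubleton)
  then have "sqrt (?x\<^sup>2) \<le> sqrt (4 * r)" by (rule real_sqrt_le_mono)
  then have "\<bar>?x\<bar> \<le> 2 * sqrt r" by (simp add: real_sqrt_mult)
  moreover have "(d {i, j})\<^sup>2 \<le> (\<Sum>e\<in>E. (d e)\<^sup>2)"
    by (rule member_le_sum[OF ij, of "\<lambda>e. (d e)\<^sup>2"]) auto
  ultimately have "(norm (p$j - p$i))\<^sup>2 \<le> (\<Sum>e\<in>E. (d e)\<^sup>2) + 2 * sqrt r" by linarith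
  then show "norm (p$j - p$i) \<le> sqrt ((\<Sum>e\<in>E. (d e)\<^sup>2) + 2 * sqrt r)" by (rule real_le_rsqrt)
qed

lemma bounded_by_psi:
  assumes "bounded_by (sublevel r) (\<lambda>p. u (psi_i E d i p)) f"
    and "mono_on {0..} u" and "\<And>y. y \<ge> 0 \<Longrightarrow> u y \<ge> 0"
  shows "bounded_by (sublevel r) (\<lambda>p. u (psi E d p)) f"
  by (rule bounded_by_mono[OF assms(1), where c=1])
    (use assms(2,3) in \<open>auto intro: mono_onD psi_i_le_psi psi_nonneg
      sum_of_squares.phi_nonneg[OF sum_of_squares_psi_i]\<close>)

lemma bounded_by_psi_1:
  "bounded_by (sublevel r) (psi_i E d i) f \<Longrightarrow> bounded_by (sublevel r) (psi E d) f"
  using bounded_by_psi[where u="\<lambda>y. y"] by (simp add: mono_on_def)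

lemma bounded_by_psi_sqrt:
  "bounded_by (sublevel r) (\<lambda>p. sqrt (psi_i E d i p)) f \<Longrightarrow> bounded_by (sublevel r) (\<lambda>p. sqrt (psi E d p)) f"
  using bounded_by_psi[where u=sqrt] by (simp add: mono_on_def)

lemma bounded_by_psi_3_2:
  "bounded_by (sublevel r) (\<lambda>p. psi_i E d i p * sqrt (psi_i E d i p)) f \<Longrightarrow>
    bounded_by (sublevel r) (\<lambda>p. psi E d p * sqrt (psi E d p)) f"
  using bounded_by_psi[where u="\<lambda>y. y * sqrt y"] by (simp add: mono_on_def mult_mono)

lemma bounded_by_sublevel_imp:
  "bounded_by (sublevel r) t f \<Longrightarrow> \<exists>c>0. \<forall>p. psi E d p \<le> r \<longrightarrow> \<bar>f p\<bar> \<le> c * t p"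
  by (drule bounded_by_imp_pos_const) (simp add: sublevel_def)

end

section \<open>The vector fields\<close>

lemma powr_3_2: "x \<ge> 0 \<Longrightarrow> x powr (3/2) = x * sqrt x"
  by (cases "x = 0") (simp_all add: powr_add[of x 1 "1/2", simplified] powr_half_sqrt)

lemma powr_5_2: "x \<ge> 0 \<Longrightarrow> x powr (5/2) = x\<^sup>2 * sqrt x"
  by (cases "x = 0") (simp_all add: powr_add[of x 2 "1/2", simplified] powr_half_sqrt powr_realpow)

lemma Xfield_eq: "Xfield E d b h (i, k, \<nu>) = (\<lambda>p. h \<nu> (psi_i E d i p) *\<^sub>R Bfield b i k)"
  by (simp add: Xfield_def fun_eq_iff)

lemma lie_Xfield:
  assumes "(F has_derivative F') (at p)"
  shows "lie (Xfield E d b h (i, k, \<nu>)) F p = h \<nu> (psi_i E d i p) * F' (Bfield b i k)"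
  using frechet_derivative_at[OF assms] linear_cmul[OF has_derivative_linear[OF assms]]
  by (simp add: lie_def Xfield_eq)

locale graph_fields = graph E d for E :: "'v::finite set set" and d +
  fixes b :: "'v \<Rightarrow> 'n::finite \<Rightarrow> real^'n" and h :: "nat \<Rightarrow> real \<Rightarrow> real"
  assumes admissible_h: "admissible_h (h 1)" "admissible_h (h 2)"
begin

lemma admissible_sos_ideal_psi_i:
  assumes "\<nu> \<in> {1, 2}"
  shows "admissible_sos_ideal (h \<nu>) E (nbrs i) (edge_defect i) (psi_i E d i)
    (dir_deriv (psi_i E d i) (Bfield b i k))"
proof -
  have "admissible_h (h \<nu>)" using assms admissible_h by auto
  then show ?thesis
    by (intro admissible_sos_ideal.intro admissible_sos.intro admissible_sos_ideal_axioms.intro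
        admissible.intro sum_of_squares_psi_i sum_of_squares.in_ideal_dir_deriv_phi)
qed

lemma sublevel_psi_i_le: "\<forall>p\<in>sublevel r. psi_i E d i p \<le> r"
  unfolding sublevel_def using psi_i_le_psi order_trans by blast


context
  fixes i1 :: 'v and k1 :: 'n and n1 :: nat
  assumes n1: "n1 \<in> {1, 2}"
begin

interpretation I1: admissible_sos_ideal "h n1" E "nbrs i1" "edge_defect i1" "psi_i E d i1"
  "dir_deriv (psi_i E d i1) (Bfield b i1 k1)"
  by (rule admissible_sos_ideal_psi_i[OF n1])

lemma X_has_derivative:
  "(Xfield E d b h (i1, k1, n1) has_derivative
      (\<lambda>v. (ext_deriv (h n1) (psi_i E d i1 p) * dir_deriv (psi_i E d i1) v p) *\<^sub>R Bfield b i1 k1)) (at p)"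
  unfolding Xfield_eq by (rule has_derivative_scaleR_left[OF I1.g_phi_has_derivative])

lemma C1_X: "C1 (Xfield E d b h (i1, k1, n1))"
proof (rule C1I[OF X_has_derivative])
  fix v :: "real^'n^'v"
  have "isCont (\<lambda>p. (ext_deriv (h n1) (psi_i E d i1 p) * dir_deriv (psi_i E d i1) v p) *\<^sub>R Bfield b i1 k1) p"
    for p
    by (intro isCont_scaleR continuous_const I1.isCont_ext_deriv_mult I1.dir_deriv_phi_zero
        edge_poly_isCont[OF edge_poly_dir_deriv[OF I1.edge_poly_phi]])
  then show "continuous_on UNIV
      (\<lambda>p. (ext_deriv (h n1) (psi_i E d i1 p) * dir_deriv (psi_i E d i1) v p) *\<^sub>R Bfield b i1 k1)"
    by (simp add: continuous_on_eq_continuous_at)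
qed

lemma X_bounded:
  assumes "r > 0"
  shows "\<exists>c>0. \<forall>p. psi E d p \<le> r \<longrightarrow> norm (Xfield E d b h (i1, k1, n1) p) \<le> c * psi E d p"
proof -
  have "bounded_by (sublevel r) (\<lambda>p. psi E d p * 1) (\<lambda>p::real^'n^'v. h n1 (psi_i E d i1 p) * norm (Bfield b i1 k1))"
    using bounded_by_psi_1[OF I1.bounded_by_g_phi[OF sublevel_subset_bounded_edges sublevel_psi_i_le]] assms
    by (intro bounded_by_mult bounded_by_const) simp
  then show ?thesis
    by (auto dest!: bounded_by_sublevel_imp simp: Xfield_eq abs_mult)
qed

lemma lie_X_psi:
  "lie (Xfield E d b h (i1, k1, n1)) (psi E d)
    = (\<lambda>p. h n1 (psi_i E d i1 p) * dir_deriv (psi_i E d i1) (Bfield b i1 k1) p)"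
  by (simp add: fun_eq_iff lie_Xfield[OF edge_poly_has_derivative[OF edge_poly_psi]] dir_deriv_psi_Bfield)

lemma lie_X_psi_has_derivative:
  "(lie (Xfield E d b h (i1, k1, n1)) (psi E d) has_derivative (\<lambda>v. I1.gA_deriv v p)) (at p)"
  unfolding lie_X_psi by (rule I1.gA_has_derivative)

lemma C2_lie_X_psi: "C2 (lie (Xfield E d b h (i1, k1, n1)) (psi E d))"
  by (rule C2I[OF lie_X_psi_has_derivative I1.gA_deriv_has_derivative])
    (simp add: continuous_on_eq_continuous_at I1.isCont_gA_deriv2)

lemma lie_X_psi_bounded:
  assumes "r > 0"
  shows "\<exists>c>0. \<forall>p. psi E d p \<le> r \<longrightarrow>
    \<bar>lie (Xfield E d b h (i1, k1, n1)) (psi E d) p\<bar> \<le> c * psi E d p powr (3/2)"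
proof -
  have "bounded_by (sublevel r) (\<lambda>p. psi E d p * sqrt (psi E d p))
      (\<lambda>p::real^'n^'v. h n1 (psi_i E d i1 p) * dir_deriv (psi_i E d i1) (Bfield b i1 k1) p)"
    using bounded_by_psi_3_2[OF I1.bounded_by_gA[OF sublevel_subset_bounded_edges sublevel_psi_i_le]] assms
    by simp
  then show ?thesis
    by (auto dest!: bounded_by_sublevel_imp simp: lie_X_psi powr_3_2 psi_nonneg)
qed

context
  fixes i2 :: 'v and k2 :: 'n and n2 :: nat
  assumes n2: "n2 \<in> {1, 2}"
begin

interpretation I2: admissible_sos_ideal "h n2" E "nbrs i2" "edge_defect i2" "psi_i E d i2"
  "dir_deriv (psi_i E d i2) (Bfield b i2 k2)"
  by (rule admissible_sos_ideal_psi_i[OF n2])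

lemma DX_X_eq:
  "frechet_derivative (Xfield E d b h (i1, k1, n1)) (at p) (Xfield E d b h (i2, k2, n2) p)
    = (h n2 (psi_i E d i2 p) * (ext_deriv (h n1) (psi_i E d i1 p) * dir_deriv (psi_i E d i1) (Bfield b i2 k2) p))
      *\<^sub>R Bfield b i1 k1"
  using frechet_derivative_at[OF X_has_derivative[of p], symmetric]
  by (simp add: Xfield_eq dir_deriv_scaleR[OF I1.edge_poly_phi])

lemma continuous_DX_X:
  "continuous_on UNIV (\<lambda>p. frechet_derivative (Xfield E d b h (i1, k1, n1)) (at p) (Xfield E d b h (i2, k2, n2) p))"
  unfolding DX_X_eq continuous_on_eq_continuous_at[OF open_UNIV]
  by (intro ballI isCont_scaleR continuous_const isCont_mult I2.isCont_g_phi I1.isCont_ext_deriv_mult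
      edge_poly_isCont[OF edge_poly_dir_deriv[OF I1.edge_poly_phi]] I1.dir_deriv_phi_zero)

lemma DX_X_bounded:
  assumes "r > 0"
  shows "\<exists>c>0. \<forall>p. psi E d p \<le> r \<longrightarrow>
    norm (frechet_derivative (Xfield E d b h (i1, k1, n1)) (at p) (Xfield E d b h (i2, k2, n2) p))
      \<le> c * psi E d p powr (3/2)"
proof -
  have "bounded_by (sublevel r) (\<lambda>p. (psi E d p * sqrt (psi E d p)) * 1)
      (\<lambda>p::real^'n^'v. (h n2 (psi_i E d i2 p) * (ext_deriv (h n1) (psi_i E d i1 p)
        * dir_deriv (psi_i E d i1) (Bfield b i2 k2) p)) * norm (Bfield b i1 k1))"
    using assms by (intro bounded_by_mult bounded_by_const
        bounded_by_psi_1[OF I2.bounded_by_g_phi[OF sublevel_subset_bounded_edges sublevel_psi_i_le]]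
        bounded_by_psi_sqrt[OF I1.bounded_by_ext_deriv_dir_deriv[OF sublevel_subset_bounded_edges
          sublevel_psi_i_le]]) simp_all
  then show ?thesis
    by (auto dest!: bounded_by_sublevel_imp simp: DX_X_eq abs_mult powr_3_2 psi_nonneg)
qed

lemma lie2_X_psi:
  "lie (Xfield E d b h (i2, k2, n2)) (lie (Xfield E d b h (i1, k1, n1)) (psi E d))
    = (\<lambda>p. h n2 (psi_i E d i2 p) * I1.gA_deriv (Bfield b i2 k2) p)"
  by (simp add: fun_eq_iff lie_Xfield[OF lie_X_psi_has_derivative])

lemma lie2_X_psi_has_derivative:
  "(lie (Xfield E d b h (i2, k2, n2)) (lie (Xfield E d b h (i1, k1, n1)) (psi E d)) has_derivative
    (\<lambda>v. h n2 (psi_i E d i2 p) * I1.gA_deriv2 (Bfield b i2 k2) v p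
      + ext_deriv (h n2) (psi_i E d i2 p) * dir_deriv (psi_i E d i2) v p * I1.gA_deriv (Bfield b i2 k2) p))
    (at p)"
  unfolding lie2_X_psi using has_derivative_mult[OF I2.g_phi_has_derivative I1.gA_deriv_has_derivative]
  by simp

lemma isCont_lie2_X_psi_deriv:
  "isCont (\<lambda>p. h n2 (psi_i E d i2 p) * I1.gA_deriv2 (Bfield b i2 k2) v p
      + ext_deriv (h n2) (psi_i E d i2 p) * dir_deriv (psi_i E d i2) v p * I1.gA_deriv (Bfield b i2 k2) p) p"
  by (intro isCont_add isCont_mult I2.isCont_g_phi I1.isCont_gA_deriv2 I1.isCont_gA_deriv
      I2.isCont_ext_deriv_mult edge_poly_isCont[OF edge_poly_dir_deriv[OF I2.edge_poly_phi]]
      I2.dir_deriv_phi_zero)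

lemma C1_lie2_X_psi: "C1 (lie (Xfield E d b h (i2, k2, n2)) (lie (Xfield E d b h (i1, k1, n1)) (psi E d)))"
  by (rule C1I[OF lie2_X_psi_has_derivative])
    (simp add: continuous_on_eq_continuous_at isCont_lie2_X_psi_deriv)

lemma lie2_X_psi_bounded:
  assumes "r > 0"
  shows "\<exists>c>0. \<forall>p. psi E d p \<le> r \<longrightarrow>
    \<bar>lie (Xfield E d b h (i2, k2, n2)) (lie (Xfield E d b h (i1, k1, n1)) (psi E d)) p\<bar> \<le> c * psi E d p ^ 2"
proof -
  have "bounded_by (sublevel r) (\<lambda>p. psi E d p * psi E d p)
      (\<lambda>p::real^'n^'v. h n2 (psi_i E d i2 p) * I1.gA_deriv (Bfield b i2 k2) p)"
    using assms by (intro bounded_by_mult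
        bounded_by_psi_1[OF I2.bounded_by_g_phi[OF sublevel_subset_bounded_edges sublevel_psi_i_le]]
        bounded_by_psi_1[OF I1.bounded_by_gA_deriv[OF sublevel_subset_bounded_edges sublevel_psi_i_le]])
      simp_all
  then show ?thesis
    by (auto dest!: bounded_by_sublevel_imp simp: lie2_X_psi power2_eq_square)
qed

context
  fixes i3 :: 'v and k3 :: 'n and n3 :: nat
  assumes n3: "n3 \<in> {1, 2}"
begin

interpretation I3: admissible_sos_ideal "h n3" E "nbrs i3" "edge_defect i3" "psi_i E d i3"
  "dir_deriv (psi_i E d i3) (Bfield b i3 k3)"
  by (rule admissible_sos_ideal_psi_i[OF n3])

lemma lie3_X_psi:
  "lie (Xfield E d b h (i3, k3, n3)) (lie (Xfield E d b h (i2, k2, n2)) (lie (Xfield E d b h (i1, k1, n1)) (psi E d)))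
    = (\<lambda>p. h n3 (psi_i E d i3 p) * (h n2 (psi_i E d i2 p) * I1.gA_deriv2 (Bfield b i2 k2) (Bfield b i3 k3) p
      + ext_deriv (h n2) (psi_i E d i2 p) * dir_deriv (psi_i E d i2) (Bfield b i3 k3) p
        * I1.gA_deriv (Bfield b i2 k2) p))"
  by (simp add: fun_eq_iff lie_Xfield[OF lie2_X_psi_has_derivative])

lemma continuous_lie3_X_psi:
  "continuous_on UNIV
    (lie (Xfield E d b h (i3, k3, n3)) (lie (Xfield E d b h (i2, k2, n2)) (lie (Xfield E d b h (i1, k1, n1)) (psi E d))))"
  unfolding lie3_X_psi continuous_on_eq_continuous_at[OF open_UNIV]
  by (intro ballI isCont_mult I3.isCont_g_phi isCont_lie2_X_psi_deriv)

lemma lie3_X_psi_bounded: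
  assumes "r > 0"
  shows "\<exists>c>0. \<forall>p. psi E d p \<le> r \<longrightarrow>
    \<bar>lie (Xfield E d b h (i3, k3, n3)) (lie (Xfield E d b h (i2, k2, n2))
      (lie (Xfield E d b h (i1, k1, n1)) (psi E d))) p\<bar> \<le> c * psi E d p powr (5/2)"
proof -
  let ?B2 = "Bfield b i2 k2" and ?B3 = "Bfield b i3 k3"
  have "r \<ge> 0" using assms by simp
  note bounds = sublevel_subset_bounded_edges[OF this] sublevel_psi_i_le
  have "bounded_by (sublevel r) (\<lambda>p. psi E d p * sqrt (psi E d p))
      (\<lambda>p::real^'n^'v. h n2 (psi_i E d i2 p) * I1.gA_deriv2 ?B2 ?B3 p)"
    by (intro bounded_by_mult bounded_by_psi_1[OF I2.bounded_by_g_phi[OF bounds]]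
        bounded_by_psi_sqrt[OF I1.bounded_by_gA_deriv2[OF bounds]])
  moreover have "bounded_by (sublevel r) (\<lambda>p. psi E d p * sqrt (psi E d p))
      (\<lambda>p::real^'n^'v. ext_deriv (h n2) (psi_i E d i2 p) * dir_deriv (psi_i E d i2) ?B3 p
        * I1.gA_deriv ?B2 p)"
    by (rule bounded_by_mono[OF bounded_by_mult[OF
          bounded_by_psi_sqrt[OF I2.bounded_by_ext_deriv_dir_deriv[OF bounds]]
          bounded_by_psi_1[OF I1.bounded_by_gA_deriv[OF bounds]]], where c=1])
      (auto simp: psi_nonneg)
  ultimately have "bounded_by (sublevel r) (\<lambda>p. psi E d p * sqrt (psi E d p))
      (\<lambda>p::real^'n^'v. h n2 (psi_i E d i2 p) * I1.gA_deriv2 ?B2 ?B3 p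
        + ext_deriv (h n2) (psi_i E d i2 p) * dir_deriv (psi_i E d i2) ?B3 p * I1.gA_deriv ?B2 p)"
    by (rule bounded_by_add)
  then have "bounded_by (sublevel r) (\<lambda>p. psi E d p * (psi E d p * sqrt (psi E d p)))
      (\<lambda>p::real^'n^'v. h n3 (psi_i E d i3 p) * (h n2 (psi_i E d i2 p) * I1.gA_deriv2 ?B2 ?B3 p
        + ext_deriv (h n2) (psi_i E d i2 p) * dir_deriv (psi_i E d i2) ?B3 p * I1.gA_deriv ?B2 p))"
    by (rule bounded_by_mult[OF bounded_by_psi_1[OF I3.bounded_by_g_phi[OF bounds]]])
  then show ?thesis
    by (auto dest!: bounded_by_sublevel_imp simp: lie3_X_psi powr_5_2 psi_nonneg power2_eq_square mult.assoc)
qed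

end

end

end

end

theorem lemma5p2:
  fixes E :: "'v::finite set set"
    and d :: "'v set \<Rightarrow> real"
    and b :: "'v \<Rightarrow> 'n::finite \<Rightarrow> real^'n"
    and h :: "nat \<Rightarrow> real \<Rightarrow> real"
    and m1 m2 m3 :: "'v \<times> 'n \<times> nat"
    and r :: real
  assumes E_ne: "E \<noteq> {}"
    and E_edges: "\<forall>e\<in>E. card e = 2"
    and d_nonneg: "\<forall>e\<in>E. d e \<ge> 0"
    and b_orthonormal: "\<forall>i k k'. b i k \<bullet> b i k' = (if k = k' then 1 else 0)"
    and h_adm: "admissible_h (h 1)" "admissible_h (h 2)"
    and h_vi: "\<exists>r' c'. r' > 0 \<and> c' > 0 \<and>
        (\<forall>y\<in>{0<..r'}. deriv (h 2) y * h 1 y - deriv (h 1) y * h 2 y \<le> - c' * y)"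
    and m_range: "snd (snd m1) \<in> {1, 2}" "snd (snd m2) \<in> {1, 2}" "snd (snd m3) \<in> {1, 2}"
    and r_pos: "r > 0"
  defines "\<Psi> \<equiv> psi E d"
    and "X \<equiv> Xfield E d b h"
  shows
    \<comment> \<open>(a)(i)\<close>
    "C1 (X m1) \<and> (\<exists>c>0. \<forall>p. \<Psi> p \<le> r \<longrightarrow> norm (X m1 p) \<le> c * \<Psi> p) \<and>
    \<comment> \<open>(a)(ii)\<close>
    continuous_on UNIV (\<lambda>p. frechet_derivative (X m1) (at p) (X m2 p)) \<and>
     (\<exists>c>0. \<forall>p. \<Psi> p \<le> r \<longrightarrow>
        norm (frechet_derivative (X m1) (at p) (X m2 p)) \<le> c * \<Psi> p powr (3/2)) \<and>
    \<comment> \<open>(b)(i)\<close>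
    C2 (lie (X m1) \<Psi>) \<and>
     (\<exists>c>0. \<forall>p. \<Psi> p \<le> r \<longrightarrow> \<bar>lie (X m1) \<Psi> p\<bar> \<le> c * \<Psi> p powr (3/2)) \<and>
    \<comment> \<open>(b)(ii)\<close>
    C1 (lie (X m2) (lie (X m1) \<Psi>)) \<and>
     (\<exists>c>0. \<forall>p. \<Psi> p \<le> r \<longrightarrow> \<bar>lie (X m2) (lie (X m1) \<Psi>) p\<bar> \<le> c * \<Psi> p ^ 2) \<and>
    \<comment> \<open>(b)(iii)\<close>
    continuous_on UNIV (lie (X m3) (lie (X m2) (lie (X m1) \<Psi>))) \<and>
     (\<exists>c>0. \<forall>p. \<Psi> p \<le> r \<longrightarrow>
        \<bar>lie (X m3) (lie (X m2) (lie (X m1) \<Psi>)) p\<bar> \<le> c * \<Psi> p powr (5/2))"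
proof -
  obtain i1 k1 n1 i2 k2 n2 i3 k3 n3 where m: "m1 = (i1, k1, n1)" "m2 = (i2, k2, n2)" "m3 = (i3, k3, n3)"
    by (metis prod.exhaust)
  with m_range have n: "n1 \<in> {1, 2}" "n2 \<in> {1, 2}" "n3 \<in> {1, 2}" by auto
  interpret graph_fields E d b h
    by (intro graph_fields.intro graph.intro graph_fields_axioms.intro E_edges h_adm)
  show ?thesis
    unfolding \<Psi>_def X_def m
    by (intro conjI C1_X[OF n(1)] X_bounded[OF n(1) r_pos]
      continuous_DX_X[OF n(1,2)] DX_X_bounded[OF n(1,2) r_pos]
      C2_lie_X_psi[OF n(1)] lie_X_psi_bounded[OF n(1) r_pos]
      C1_lie2_X_psi[OF n(1,2)] lie2_X_psi_bounded[OF n(1,2) r_pos]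
      continuous_lie3_X_psi[OF n] lie3_X_psi_bounded[OF n r_pos])
qed
end
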